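(* Let $m\ge 1$, $k\in\{2,3,4\}$ and $n\ge k-1$. There exists $P\in U_{m,k}$ with two properties. First, its homogeneous component $\varphi_{m,k}(P)$ of degree $mn+(m+1)(k-1)-1$ lies in $W_{m,k}$. Second, when $\varphi_{m,k}(P)$ is written in the basis of $W_{m,k}$ given below, the coefficient of the basis element $$(x_1\cdots x_n)^m\big(x_1^{(m+1)(k-1)-1}+\cdots+x_n^{(m+1)(k-1)-1}\big)$$ is nonzero.
   Context: $mB^n=\{0,1,\ldots,m\}^n$. A polynomial has a zero of multiplicity at least $k$ at $\mathbf a$ if all its partial derivatives of order less than $k$ vanish at $\mathbf a$. For an integer $k\ge 2$, a polynomial $P\in\mathbb{R}[x_1,\ldots,x_n]$ is called $(m,k)$-reduced if two conditions hold: $\deg P\le mn+(m+1)(k-1)-1$, and no monomial of $P$ is divisible by $x_{i_1}^{m+1}\cdots x_{i_k}^{m+1}$ for any indices $i_1,\ldots,i_k$ (not necessarily distinct). $U_{m,k}$ is the space of $(m,k)$-reduced polynomials with a zero of multiplicity at least $k$ at every point of $mB^n\setminus\{\mathbf 0\}$. $\varphi_{m,k}(P)$ is the homogeneous component of $P$ of degree $mn+(m+1)(k-1)-1$. $W_{m,k}$ is the real span of the polynomials $(x_1\cdots x_n)^m(x_1^{l_1}\cdots x_n^{l_n})^{m+1}(x_1^d+\cdots+x_n^d)$ with $d,l_1,\ldots,l_n$ nonnegative integers and $d+(m+1)(l_1+\cdots+l_n)=(m+1)(k-1)-1$. For $n\ge k-1$ these polynomials form a basis of $W_{m,k}$. 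*)

theory Defs
  imports Complex_Main
begin

text \<open>Real polynomials in the variables x_0, ..., x_(n-1) are represented by their
coefficient functions: a monomial is an exponent vector (nat => nat), and a polynomial
is a map from exponent vectors to real coefficients.\<close>

type_synonym mono = "nat \<Rightarrow> nat"
type_synonym mpoly = "mono \<Rightarrow> real"

definition is_mono :: "nat \<Rightarrow> mono \<Rightarrow> bool" where
  "is_mono n \<alpha> \<longleftrightarrow> (\<forall>i\<ge>n. \<alpha> i = 0)"

definition is_poly :: "nat \<Rightarrow> mpoly \<Rightarrow> bool" where
  "is_poly n P \<longleftrightarrow> finite {\<alpha>. P \<alpha> \<noteq> 0} \<and> (\<forall>\<alpha>. P \<alpha> \<noteq> 0 \<longrightarrow> is_mono n \<alpha>)"

definition mdeg :: "nat \<Rightarrow> mono \<Rightarrow> nat" where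
  "mdeg n \<alpha> = (\<Sum>i<n. \<alpha> i)"

definition pderiv_at :: "nat \<Rightarrow> mpoly \<Rightarrow> mono \<Rightarrow> (nat \<Rightarrow> real) \<Rightarrow> real" where
  "pderiv_at n P \<alpha> a = (\<Sum>\<beta>\<in>{\<beta>. P \<beta> \<noteq> 0}. P \<beta> *
      (\<Prod>i<n. of_nat (\<beta> i choose \<alpha> i) * fact (\<alpha> i) * a i ^ (\<beta> i - \<alpha> i)))"

definition zero_mult_ge :: "nat \<Rightarrow> mpoly \<Rightarrow> nat \<Rightarrow> (nat \<Rightarrow> real) \<Rightarrow> bool" where
  "zero_mult_ge n P k a \<longleftrightarrow> (\<forall>\<alpha>. is_mono n \<alpha> \<longrightarrow> mdeg n \<alpha> < k \<longrightarrow> pderiv_at n P \<alpha> a = 0)"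

text \<open>x_{j 0}^(m+1) ... x_{j (k-1)}^(m+1) divides x^alpha, indices j t < n not necessarily distinct.\<close>
definition divisible_by_k_powers :: "nat \<Rightarrow> nat \<Rightarrow> nat \<Rightarrow> mono \<Rightarrow> bool" where
  "divisible_by_k_powers n m k \<alpha> \<longleftrightarrow>
     (\<exists>j::nat \<Rightarrow> nat. (\<forall>t<k. j t < n) \<and>
        (\<forall>i<n. (m + 1) * card {t. t < k \<and> j t = i} \<le> \<alpha> i))"

definition reduced :: "nat \<Rightarrow> nat \<Rightarrow> nat \<Rightarrow> mpoly \<Rightarrow> bool" where
  "reduced n m k P \<longleftrightarrow> is_poly n P \<and>
     (\<forall>\<alpha>. P \<alpha> \<noteq> 0 \<longrightarrow> mdeg n \<alpha> \<le> m * n + (m + 1) * (k - 1) - 1) \<and>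
     (\<forall>\<alpha>. P \<alpha> \<noteq> 0 \<longrightarrow> \<not> divisible_by_k_powers n m k \<alpha>)"

definition U :: "nat \<Rightarrow> nat \<Rightarrow> nat \<Rightarrow> mpoly set" where
  "U n m k = {P. reduced n m k P \<and>
     (\<forall>a::nat \<Rightarrow> nat. (\<forall>i<n. a i \<le> m) \<and> (\<exists>i<n. a i \<noteq> 0) \<longrightarrow>
        zero_mult_ge n P k (\<lambda>i. real (a i)))}"

definition phi :: "nat \<Rightarrow> nat \<Rightarrow> nat \<Rightarrow> mpoly \<Rightarrow> mpoly" where
  "phi n m k P = (\<lambda>\<alpha>. if mdeg n \<alpha> = m * n + (m + 1) * (k - 1) - 1 then P \<alpha> else 0)"

text \<open>The polynomial (x_0...x_(n-1))^m (x^l)^(m+1) (x_0^d + ... + x_(n-1)^d).\<close>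
definition wpoly :: "nat \<Rightarrow> nat \<Rightarrow> nat \<Rightarrow> mono \<Rightarrow> mpoly" where
  "wpoly n m d l = (\<lambda>\<beta>. \<Sum>i<n. if \<beta> = (\<lambda>j. if j < n then m + (m + 1) * l j + (if j = i then d else 0) else 0)
                               then 1 else 0)"

text \<open>Index set of the spanning family of W_{m,k}.\<close>
definition W_index :: "nat \<Rightarrow> nat \<Rightarrow> nat \<Rightarrow> (nat \<times> mono) set" where
  "W_index n m k = {(d, l). is_mono n l \<and> d + (m + 1) * (\<Sum>i<n. l i) = (m + 1) * (k - 1) - 1}"

end

(*
  The witness is P = W Q with W(x) = u(x_1) ... u(x_n), where u(x) = (1 - x/1) ... (1 - x/m) has
  u(0) = 1 and vanishes at 1, ..., m, and with

    Q(x) = sum_i f(x_i) + sum_(i <> j) p(x_i) e(x_j) + c sum_(i, j, h distinct) e(x_i) e(x_j) e(x_h) - 1,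

  where e = 1 - u. At a grid point with r nonzero coordinates, W vanishes to order r, so by the
  Leibniz rule it suffices that all derivatives of Q of order < k - r vanish there. These finitely
  many conditions only involve the values of f, p, e on the grid and their first two derivatives at
  0 and on the grid; they hold for suitable f, p, c when k = 2, 3, 4 (for k = 4 the choice of f needs
  u''(0)/2 <> 2 u'(0)^2). The pair and triple terms have low enough degree to keep P reduced and
  below the top degree mn + deg f, so the top component of P is lead(u)^n lead(f) times the basis
  element (x_1 ... x_n)^m (x_1^D + ... + x_n^D).
*)

theory Submission
  imports Defs "HOL-Computational_Algebra.Polynomial" "HOL-Library.FuncSet"
begin

section \<open>Higher derivatives of univariate polynomials\<close>

definition hderiv :: "real poly \<Rightarrow> nat \<Rightarrow> real \<Rightarrow> real" where
  "hderiv f s x = poly ((pderiv ^^ s) f) x"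

lemma hderiv_0 [simp]: "hderiv f 0 x = poly f x"
  by (simp add: hderiv_def)

lemma hderiv_1: "hderiv f 1 x = poly (pderiv f) x"
  by (simp add: hderiv_def)

lemma hderiv_2: "hderiv f 2 x = poly (pderiv (pderiv f)) x"
  by (simp add: hderiv_def numeral_2_eq_2)

lemma hderiv_add: "hderiv (f + g) s x = hderiv f s x + hderiv g s x"
  by (simp add: hderiv_def higher_pderiv_add)

lemma hderiv_smult: "hderiv (smult c f) s x = c * hderiv f s x"
  by (simp add: hderiv_def higher_pderiv_smult)

lemma hderiv_diff: "hderiv (f - g) s x = hderiv f s x - hderiv g s x"
  using hderiv_add[of f "- g" s x] hderiv_smult[of "- 1" g s x] by simp

lemma hderiv_const: "hderiv [:c:] s x = (if s = 0 then c else 0)"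
  by (cases s) (simp_all add: hderiv_def pderiv_pCons funpow_Suc_right del: funpow.simps)

lemma hderiv_one: "hderiv 1 s x = (if s = 0 then 1 else 0)"
  using hderiv_const[of 1 s x] by (simp add: one_pCons)

lemma pochhammer_Suc_eq_binomial:
  "pochhammer (1 + real j) s = (of_nat ((j + s) choose s) * fact s :: real)"
proof -
  have "(of_nat (j + s) gchoose s :: real) = pochhammer (of_nat (j + s) - of_nat s + 1) s / fact s"
    by (rule gbinomial_pochhammer')
  moreover have "(of_nat (j + s) - of_nat s + 1 :: real) = 1 + real j" by simp
  ultimately show ?thesis by (simp add: binomial_gbinomial field_simps)
qed

lemma poly_eq_sum_atMost:
  assumes "degree g \<le> N"
  shows "poly g (x :: real) = (\<Sum>j\<le>N. coeff g j * x ^ j)"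
  unfolding poly_altdef
  by (rule sum.mono_neutral_left) (use assms in \<open>auto simp: coeff_eq_0\<close>)

lemma hderiv_eq_sum:
  assumes "degree f \<le> N"
  shows "hderiv f s x = (\<Sum>b\<le>N. coeff f b * (of_nat (b choose s) * fact s * x ^ (b - s)))"
proof -
  let ?t = "\<lambda>b. coeff f b * (of_nat (b choose s) * fact s * x ^ (b - s))"
  have "degree ((pderiv ^^ s) f) \<le> N" using assms by (simp add: degree_higher_pderiv)
  then have "hderiv f s x = (\<Sum>j\<le>N. coeff ((pderiv ^^ s) f) j * x ^ j)"
    unfolding hderiv_def by (rule poly_eq_sum_atMost)
  also have "\<dots> = (\<Sum>j\<le>N. ?t (j + s))"
    using pochhammer_Suc_eq_binomial by (simp add: coeff_higher_pderiv mult_ac)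
  also have "\<dots> = (\<Sum>b\<in>{s..N + s}. ?t b)"
    using sum.shift_bounds_cl_nat_ivl[of ?t 0 s N] by (simp add: atLeast0AtMost)
  also have "\<dots> = (\<Sum>b\<le>N + s. ?t b)"
    by (rule sum.mono_neutral_left) auto
  also have "\<dots> = (\<Sum>b\<le>N. ?t b)"
    by (rule sum.mono_neutral_right) (use assms in \<open>auto simp: coeff_eq_0\<close>)
  finally show ?thesis .
qed

lemma higher_pderiv_mult:
  fixes f g :: "'a :: {comm_ring_1, semiring_no_zero_divisors} poly"
  shows "(pderiv ^^ s) (f * g) =
    (\<Sum>j\<le>s. smult (of_nat (s choose j)) ((pderiv ^^ j) f * (pderiv ^^ (s - j)) g))"
proof (induction s)
  case 0
  then show ?case by simp
next
  case (Suc s)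
  define X where "X j = (pderiv ^^ j) f * (pderiv ^^ (Suc s - j)) g" for j
  have step: "pderiv ((pderiv ^^ j) f * (pderiv ^^ (s - j)) g) = X j + X (Suc j)" if "j \<le> s" for j
    using that by (simp add: X_def pderiv_mult Suc_diff_le mult.commute)
  have "(pderiv ^^ Suc s) (f * g) =
      (\<Sum>j\<le>s. smult (of_nat (s choose j)) (pderiv ((pderiv ^^ j) f * (pderiv ^^ (s - j)) g)))"
    by (simp add: Suc pderiv_smult higher_pderiv_sum[of 1, simplified])
  also have "\<dots> = (\<Sum>j\<le>s. smult (of_nat (s choose j)) (X j))
      + (\<Sum>j\<le>s. smult (of_nat (s choose j)) (X (Suc j)))"
    by (simp add: step smult_add_right sum.distrib)
  also have "(\<Sum>j\<le>s. smult (of_nat (s choose j)) (X j))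
      = X 0 + (\<Sum>j\<le>s. smult (of_nat (s choose Suc j)) (X (Suc j)))"
    using sum.atMost_Suc_shift[of "\<lambda>j. smult (of_nat (s choose j)) (X j)" s]
    by (simp add: binomial_eq_0)
  also have "X 0 + (\<Sum>j\<le>s. smult (of_nat (s choose Suc j)) (X (Suc j)))
      + (\<Sum>j\<le>s. smult (of_nat (s choose j)) (X (Suc j)))
      = (\<Sum>j\<le>Suc s. smult (of_nat (Suc s choose j)) (X j))"
    by (subst sum.atMost_Suc_shift) (simp add: sum.distrib smult_add_left add_ac)
  finally show ?case by (simp add: X_def)
qed

lemma hderiv_mult:
  "hderiv (f * g) s x = (\<Sum>j\<le>s. of_nat (s choose j) * hderiv f j x * hderiv g (s - j) x)"
  unfolding hderiv_def higher_pderiv_mult by (simp add: poly_sum mult_ac)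

lemma higher_pderiv_dvd_linear_power:
  fixes f :: "real poly"
  assumes "[:-t, 1:] ^ k dvd f" "s \<le> k"
  shows "[:-t, 1:] ^ (k - s) dvd (pderiv ^^ s) f"
  using assms
proof (induction s)
  case 0
  then show ?case by simp
next
  case (Suc s)
  then obtain q where q: "(pderiv ^^ s) f = [:-t, 1:] ^ Suc (k - Suc s) * q"
    by (metis Suc_diff_Suc Suc_le_lessD dvdE less_imp_le_nat)
  have "pderiv ((pderiv ^^ s) f) =
      [:-t, 1:] ^ (k - Suc s) * ([:-t, 1:] * pderiv q + smult (of_nat (Suc (k - Suc s))) q)"
    unfolding q pderiv_mult pderiv_power_Suc by (simp add: pderiv_pCons algebra_simps)
  then show ?case by simp
qed

lemma hderiv_eq_0_at_multiple_root:
  assumes "[:-t, 1:] ^ k dvd f" "s < k"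
  shows "hderiv f s t = 0"
proof -
  have "[:-t, 1:] ^ (k - s) dvd (pderiv ^^ s) f"
    using higher_pderiv_dvd_linear_power[OF assms(1)] assms(2) by simp
  then obtain q where "(pderiv ^^ s) f = [:-t, 1:] ^ (k - s) * q" by (auto elim: dvdE)
  then show ?thesis using assms(2) by (simp add: hderiv_def)
qed

section \<open>Tensor products of univariate polynomials\<close>

definition tensor_poly :: "nat \<Rightarrow> (nat \<Rightarrow> real poly) \<Rightarrow> mpoly" where
  "tensor_poly n f = (\<lambda>\<beta>. if is_mono n \<beta> then (\<Prod>i<n. coeff (f i) (\<beta> i)) else 0)"

definition tensor_deriv :: "nat \<Rightarrow> (nat \<Rightarrow> real poly) \<Rightarrow> mono \<Rightarrow> (nat \<Rightarrow> real) \<Rightarrow> real" where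
  "tensor_deriv n f \<alpha> a = (\<Prod>i<n. hderiv (f i) (\<alpha> i) (a i))"

definition mono_box :: "nat \<Rightarrow> (nat \<Rightarrow> nat) \<Rightarrow> mono set" where
  "mono_box n N = {\<beta>. is_mono n \<beta> \<and> (\<forall>i<n. \<beta> i \<le> N i)}"

lemma finite_mono_box: "finite (mono_box n N)"
proof (rule finite_subset)
  let ?M = "\<Sum>i<n. N i"
  show "mono_box n N \<subseteq> {f. \<forall>x. (x \<in> {..<n} \<longrightarrow> f x \<in> {..?M}) \<and> (x \<notin> {..<n} \<longrightarrow> f x = 0)}"
  proof
    fix \<beta> assume \<beta>: "\<beta> \<in> mono_box n N"
    have "\<beta> x \<le> ?M" if "x < n" for x
      using \<beta> that member_le_sum[of x "{..<n}" N] by (auto simp: mono_box_def)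
    then show "\<beta> \<in> {f. \<forall>x. (x \<in> {..<n} \<longrightarrow> f x \<in> {..?M}) \<and> (x \<notin> {..<n} \<longrightarrow> f x = 0)}"
      using \<beta> by (auto simp: mono_box_def is_mono_def)
  qed
  show "finite {f. \<forall>x. (x \<in> {..<n} \<longrightarrow> f x \<in> {..?M}) \<and> (x \<notin> {..<n} \<longrightarrow> (f x :: nat) = 0)}"
    by (rule finite_set_of_finite_funs) auto
qed

lemma tensor_poly_support: "tensor_poly n f \<beta> \<noteq> 0 \<Longrightarrow> \<beta> \<in> mono_box n (\<lambda>i. degree (f i))"
  unfolding tensor_poly_def mono_box_def by (auto split: if_splits intro: le_degree)

lemma prod_sum_mono_box:
  fixes F :: "nat \<Rightarrow> nat \<Rightarrow> real"
  shows "(\<Prod>i<n. \<Sum>b\<le>N i. F i b) = (\<Sum>\<beta>\<in>mono_box n N. \<Prod>i<n. F i (\<beta> i))"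
proof -
  have "(\<Prod>i<n. \<Sum>b\<le>N i. F i b) = (\<Sum>g\<in>PiE {..<n} (\<lambda>i. {..N i}). \<Prod>i<n. F i (g i))"
    by (rule prod_sum_PiE) auto
  also have "\<dots> = (\<Sum>\<beta>\<in>mono_box n N. \<Prod>i<n. F i (\<beta> i))"
  proof (rule sum.reindex_bij_witness[where i = "\<lambda>\<beta>. restrict \<beta> {..<n}"
        and j = "\<lambda>g i. if i < n then g i else 0"])
    fix g assume g: "g \<in> PiE {..<n} (\<lambda>i. {..N i})"
    then show "restrict (\<lambda>i. if i < n then g i else 0) {..<n} = g"
      by (auto simp: PiE_def extensional_def fun_eq_iff)
    show "(\<lambda>i. if i < n then g i else 0) \<in> mono_box n N"
      using g by (auto simp: mono_box_def is_mono_def)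
    show "(\<Prod>i<n. F i (if i < n then g i else 0)) = (\<Prod>i<n. F i (g i))"
      by (intro prod.cong) auto
  next
    fix \<beta> assume "\<beta> \<in> mono_box n N"
    then show "(\<lambda>i. if i < n then restrict \<beta> {..<n} i else 0) = \<beta>"
      and "restrict \<beta> {..<n} \<in> PiE {..<n} (\<lambda>i. {..N i})"
      by (auto simp: mono_box_def is_mono_def fun_eq_iff)
  qed
  finally show ?thesis .
qed

definition finite_support :: "mpoly \<Rightarrow> bool" where
  "finite_support P \<longleftrightarrow> finite {\<beta>. P \<beta> \<noteq> 0}"

lemma finite_support_tensor_poly [simp]: "finite_support (tensor_poly n f)"
  unfolding finite_support_def
  by (rule finite_subset[OF _ finite_mono_box]) (auto dest: tensor_poly_support)

lemma finite_support_sum [simp]: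
  assumes "\<And>t. t \<in> I \<Longrightarrow> finite_support (P t)"
  shows "finite_support (\<lambda>\<beta>. \<Sum>t\<in>I. P t \<beta>)"
proof (cases "finite I")
  case True
  have "{\<beta>. (\<Sum>t\<in>I. P t \<beta>) \<noteq> 0} \<subseteq> (\<Union>t\<in>I. {\<beta>. P t \<beta> \<noteq> 0})"
    by (auto elim: sum.not_neutral_contains_not_neutral)
  then show ?thesis
    unfolding finite_support_def
    by (rule finite_subset) (use assms True in \<open>auto simp: finite_support_def\<close>)
qed (simp add: finite_support_def)

lemma finite_support_if [simp]: "finite_support P \<Longrightarrow> finite_support (\<lambda>\<beta>. if b then P \<beta> else 0)"
  by (cases b) (simp_all add: finite_support_def)

lemma finite_support_cmult [simp]: "finite_support P \<Longrightarrow> finite_support (\<lambda>\<beta>. c * P \<beta>)"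
  unfolding finite_support_def by (rule finite_subset[of _ "{\<beta>. P \<beta> \<noteq> 0}"]) auto

lemma finite_support_add [simp]:
  "finite_support P \<Longrightarrow> finite_support Q \<Longrightarrow> finite_support (\<lambda>\<beta>. P \<beta> + Q \<beta>)"
  unfolding finite_support_def by (rule finite_subset[of _ "{\<beta>. P \<beta> \<noteq> 0} \<union> {\<beta>. Q \<beta> \<noteq> 0}"]) auto

lemma finite_support_diff [simp]:
  "finite_support P \<Longrightarrow> finite_support Q \<Longrightarrow> finite_support (\<lambda>\<beta>. P \<beta> - Q \<beta>)"
  unfolding finite_support_def by (rule finite_subset[of _ "{\<beta>. P \<beta> \<noteq> 0} \<union> {\<beta>. Q \<beta> \<noteq> 0}"]) auto

lemma pderiv_at_superset:
  assumes "finite S" "{\<beta>. P \<beta> \<noteq> 0} \<subseteq> S"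
  shows "pderiv_at n P \<alpha> a =
    (\<Sum>\<beta>\<in>S. P \<beta> * (\<Prod>i<n. of_nat (\<beta> i choose \<alpha> i) * fact (\<alpha> i) * a i ^ (\<beta> i - \<alpha> i)))"
  unfolding pderiv_at_def by (rule sum.mono_neutral_left) (use assms in auto)

lemma pderiv_at_sum [simp]:
  assumes "finite I" "\<And>t. t \<in> I \<Longrightarrow> finite_support (P t)"
  shows "pderiv_at n (\<lambda>\<beta>. \<Sum>t\<in>I. P t \<beta>) \<alpha> a = (\<Sum>t\<in>I. pderiv_at n (P t) \<alpha> a)"
proof -
  let ?S = "\<Union>t\<in>I. {\<beta>. P t \<beta> \<noteq> 0}"
  let ?K = "\<lambda>\<beta>. \<Prod>i<n. of_nat (\<beta> i choose \<alpha> i) * fact (\<alpha> i) * a i ^ (\<beta> i - \<alpha> i)"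
  have fin: "finite ?S" using assms by (auto simp: finite_support_def)
  have "pderiv_at n (\<lambda>\<beta>. \<Sum>t\<in>I. P t \<beta>) \<alpha> a = (\<Sum>\<beta>\<in>?S. (\<Sum>t\<in>I. P t \<beta>) * ?K \<beta>)"
    by (rule pderiv_at_superset[OF fin]) (auto elim: sum.not_neutral_contains_not_neutral)
  also have "\<dots> = (\<Sum>t\<in>I. \<Sum>\<beta>\<in>?S. P t \<beta> * ?K \<beta>)"
    by (simp add: sum_distrib_right sum.swap[of _ ?S])
  also have "\<dots> = (\<Sum>t\<in>I. pderiv_at n (P t) \<alpha> a)"
    by (intro sum.cong refl pderiv_at_superset[symmetric] fin) auto
  finally show ?thesis .
qed

lemma pderiv_at_add [simp]:
  "finite_support P \<Longrightarrow> finite_support Q \<Longrightarrow>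
    pderiv_at n (\<lambda>\<beta>. P \<beta> + Q \<beta>) \<alpha> a = pderiv_at n P \<alpha> a + pderiv_at n Q \<alpha> a"
  using pderiv_at_sum[of "{True, False}" "\<lambda>t. if t then P else Q" n \<alpha> a]
  by (simp add: if_distrib cong: if_cong)

lemma pderiv_at_cmult [simp]:
  assumes "finite_support P"
  shows "pderiv_at n (\<lambda>\<beta>. c * P \<beta>) \<alpha> a = c * pderiv_at n P \<alpha> a"
proof -
  have fin: "finite {\<beta>. P \<beta> \<noteq> 0}" using assms by (simp add: finite_support_def)
  have "pderiv_at n (\<lambda>\<beta>. c * P \<beta>) \<alpha> a = (\<Sum>\<beta>\<in>{\<beta>. P \<beta> \<noteq> 0}. c * P \<beta> *
      (\<Prod>i<n. of_nat (\<beta> i choose \<alpha> i) * fact (\<alpha> i) * a i ^ (\<beta> i - \<alpha> i)))"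
    by (rule pderiv_at_superset[OF fin]) auto
  also have "\<dots> = c * pderiv_at n P \<alpha> a"
    by (subst pderiv_at_superset[OF fin, where P = P]) (auto simp: sum_distrib_left mult_ac)
  finally show ?thesis .
qed

lemma pderiv_at_diff [simp]:
  assumes "finite_support P" "finite_support Q"
  shows "pderiv_at n (\<lambda>\<beta>. P \<beta> - Q \<beta>) \<alpha> a = pderiv_at n P \<alpha> a - pderiv_at n Q \<alpha> a"
proof -
  have "pderiv_at n (\<lambda>\<beta>. P \<beta> - Q \<beta>) \<alpha> a = pderiv_at n (\<lambda>\<beta>. P \<beta> + (- 1) * Q \<beta>) \<alpha> a"
    by simp
  also have "\<dots> = pderiv_at n P \<alpha> a - pderiv_at n Q \<alpha> a"
    using assms by (simp only: pderiv_at_add pderiv_at_cmult finite_support_cmult)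
  finally show ?thesis .
qed

lemma pderiv_at_if [simp]:
  "pderiv_at n (\<lambda>\<beta>. if b then P \<beta> else 0) \<alpha> a = (if b then pderiv_at n P \<alpha> a else 0)"
  by (cases b) (simp_all add: pderiv_at_def)

lemma pderiv_at_tensor_poly: "pderiv_at n (tensor_poly n f) \<alpha> a = tensor_deriv n f \<alpha> a"
proof -
  let ?N = "\<lambda>i. degree (f i)"
  let ?t = "\<lambda>i b. coeff (f i) b * (of_nat (b choose \<alpha> i) * fact (\<alpha> i) * a i ^ (b - \<alpha> i))"
  have "pderiv_at n (tensor_poly n f) \<alpha> a = (\<Sum>\<beta>\<in>mono_box n ?N. tensor_poly n f \<beta> *
      (\<Prod>i<n. of_nat (\<beta> i choose \<alpha> i) * fact (\<alpha> i) * a i ^ (\<beta> i - \<alpha> i)))"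
    by (rule pderiv_at_superset[OF finite_mono_box]) (auto dest: tensor_poly_support)
  also have "\<dots> = (\<Sum>\<beta>\<in>mono_box n ?N. \<Prod>i<n. ?t i (\<beta> i))"
    by (intro sum.cong refl) (auto simp: tensor_poly_def mono_box_def prod.distrib)
  also have "\<dots> = (\<Prod>i<n. \<Sum>b\<le>?N i. ?t i b)"
    by (rule prod_sum_mono_box[symmetric])
  also have "\<dots> = tensor_deriv n f \<alpha> a"
    unfolding tensor_deriv_def by (intro prod.cong refl hderiv_eq_sum[symmetric]) simp
  finally show ?thesis .
qed

definition leibniz_coeff :: "nat \<Rightarrow> real poly \<Rightarrow> mono \<Rightarrow> mono \<Rightarrow> (nat \<Rightarrow> real) \<Rightarrow> real" where
  "leibniz_coeff n w \<alpha> \<gamma> a = (\<Prod>i<n. of_nat (\<alpha> i choose \<gamma> i) * hderiv w (\<gamma> i) (a i))"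

lemma pderiv_at_tensor_poly_mult:
  "pderiv_at n (tensor_poly n (\<lambda>i. w * q i)) \<alpha> a =
    (\<Sum>\<gamma>\<in>mono_box n \<alpha>. leibniz_coeff n w \<alpha> \<gamma> a * tensor_deriv n q (\<lambda>i. \<alpha> i - \<gamma> i) a)"
proof -
  have "pderiv_at n (tensor_poly n (\<lambda>i. w * q i)) \<alpha> a =
      (\<Prod>i<n. \<Sum>j\<le>\<alpha> i. of_nat (\<alpha> i choose j) * hderiv w j (a i) * hderiv (q i) (\<alpha> i - j) (a i))"
    by (simp add: pderiv_at_tensor_poly tensor_deriv_def hderiv_mult)
  also have "\<dots> = (\<Sum>\<gamma>\<in>mono_box n \<alpha>.
      \<Prod>i<n. of_nat (\<alpha> i choose \<gamma> i) * hderiv w (\<gamma> i) (a i) * hderiv (q i) (\<alpha> i - \<gamma> i) (a i))"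
    by (rule prod_sum_mono_box)
  finally show ?thesis
    by (simp add: leibniz_coeff_def tensor_deriv_def prod.distrib)
qed

section \<open>The witness polynomial and its derivatives\<close>

definition at_coord :: "nat \<Rightarrow> real poly \<Rightarrow> nat \<Rightarrow> real poly" where
  "at_coord i f = (\<lambda>l. if l = i then f else 1)"

definition single_sum :: "nat \<Rightarrow> real poly \<Rightarrow> real poly \<Rightarrow> mpoly" where
  "single_sum n w f = (\<lambda>\<beta>. \<Sum>i<n. tensor_poly n (\<lambda>l. w * at_coord i f l) \<beta>)"

definition pair_sum :: "nat \<Rightarrow> real poly \<Rightarrow> real poly \<Rightarrow> real poly \<Rightarrow> mpoly" where
  "pair_sum n w p g = (\<lambda>\<beta>. \<Sum>i<n. \<Sum>j<n. if i \<noteq> j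
     then tensor_poly n (\<lambda>l. w * (at_coord i p l * at_coord j g l)) \<beta> else 0)"

definition triple_sum :: "nat \<Rightarrow> real poly \<Rightarrow> real poly \<Rightarrow> mpoly" where
  "triple_sum n w g = (\<lambda>\<beta>. \<Sum>i<n. \<Sum>j<n. \<Sum>h<n. if i \<noteq> j \<and> i \<noteq> h \<and> j \<noteq> h
     then tensor_poly n (\<lambda>l. w * (at_coord i g l * at_coord j g l * at_coord h g l)) \<beta> else 0)"

text \<open>The witness is \<open>W(x) Q(x)\<close>, where \<open>W(x) = w(x_0) ... w(x_(n-1))\<close> and
  \<open>Q(x) = \<Sum>_i f(x_i) + \<Sum>_(i \<noteq> j) p(x_i) g(x_j) + c \<Sum> g(x_i) g(x_j) g(x_h) - 1\<close>, the last sum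
  running over pairwise distinct indices; \<open>cofactor_deriv n f p g c \<beta> a\<close> below is the
  derivative \<open>\<partial>^\<beta> Q\<close> at \<open>a\<close>.\<close>

definition witness :: "nat \<Rightarrow> real poly \<Rightarrow> real poly \<Rightarrow> real poly \<Rightarrow> real poly \<Rightarrow> real \<Rightarrow> mpoly" where
  "witness n w f p g c = (\<lambda>\<beta>. single_sum n w f \<beta> + pair_sum n w p g \<beta>
     + c * triple_sum n w g \<beta> - tensor_poly n (\<lambda>_. w) \<beta>)"

definition single_deriv :: "nat \<Rightarrow> real poly \<Rightarrow> mono \<Rightarrow> (nat \<Rightarrow> real) \<Rightarrow> real" where
  "single_deriv n f \<beta> a = (\<Sum>i<n. tensor_deriv n (at_coord i f) \<beta> a)"

definition pair_deriv :: "nat \<Rightarrow> real poly \<Rightarrow> real poly \<Rightarrow> mono \<Rightarrow> (nat \<Rightarrow> real) \<Rightarrow> real" where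
  "pair_deriv n p g \<beta> a = (\<Sum>i<n. \<Sum>j<n. if i \<noteq> j
     then tensor_deriv n (\<lambda>l. at_coord i p l * at_coord j g l) \<beta> a else 0)"

definition triple_deriv :: "nat \<Rightarrow> real poly \<Rightarrow> mono \<Rightarrow> (nat \<Rightarrow> real) \<Rightarrow> real" where
  "triple_deriv n g \<beta> a = (\<Sum>i<n. \<Sum>j<n. \<Sum>h<n. if i \<noteq> j \<and> i \<noteq> h \<and> j \<noteq> h
     then tensor_deriv n (\<lambda>l. at_coord i g l * at_coord j g l * at_coord h g l) \<beta> a else 0)"

definition cofactor_deriv ::
  "nat \<Rightarrow> real poly \<Rightarrow> real poly \<Rightarrow> real poly \<Rightarrow> real \<Rightarrow> mono \<Rightarrow> (nat \<Rightarrow> real) \<Rightarrow> real" where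
  "cofactor_deriv n f p g c \<beta> a = single_deriv n f \<beta> a + pair_deriv n p g \<beta> a
     + c * triple_deriv n g \<beta> a - tensor_deriv n (\<lambda>_. 1) \<beta> a"

lemma if_sum_mult: "(if b then \<Sum>\<gamma>\<in>B. h \<gamma> * X \<gamma> else 0) = (\<Sum>\<gamma>\<in>B. (h \<gamma> :: real) * (if b then X \<gamma> else 0))"
  by simp

lemma sum_mult_swap: "(\<Sum>i\<in>I. \<Sum>\<gamma>\<in>B. h \<gamma> * X i \<gamma>) = (\<Sum>\<gamma>\<in>B. (h \<gamma> :: real) * (\<Sum>i\<in>I. X i \<gamma>))"
  unfolding sum_distrib_left by (rule sum.swap)

lemma pderiv_at_witness:
  "pderiv_at n (witness n w f p g c) \<alpha> a = (\<Sum>\<gamma>\<in>mono_box n \<alpha>.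
     leibniz_coeff n w \<alpha> \<gamma> a * cofactor_deriv n f p g c (\<lambda>i. \<alpha> i - \<gamma> i) a)"
proof -
  let ?L = "\<lambda>\<gamma>. leibniz_coeff n w \<alpha> \<gamma> a" and ?d = "\<lambda>\<gamma> i. \<alpha> i - \<gamma> i"
  have single: "pderiv_at n (single_sum n w f) \<alpha> a = (\<Sum>\<gamma>\<in>mono_box n \<alpha>. ?L \<gamma> * single_deriv n f (?d \<gamma>) a)"
    unfolding single_sum_def single_deriv_def by (simp add: pderiv_at_tensor_poly_mult sum_mult_swap)
  have pair: "pderiv_at n (pair_sum n w p g) \<alpha> a = (\<Sum>\<gamma>\<in>mono_box n \<alpha>. ?L \<gamma> * pair_deriv n p g (?d \<gamma>) a)"
    unfolding pair_sum_def pair_deriv_def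
    by (simp add: pderiv_at_tensor_poly_mult if_sum_mult sum_mult_swap cong: if_cong)
  have triple: "pderiv_at n (triple_sum n w g) \<alpha> a = (\<Sum>\<gamma>\<in>mono_box n \<alpha>. ?L \<gamma> * triple_deriv n g (?d \<gamma>) a)"
    unfolding triple_sum_def triple_deriv_def
    by (simp add: pderiv_at_tensor_poly_mult if_sum_mult sum_mult_swap cong: if_cong)
  have one: "pderiv_at n (tensor_poly n (\<lambda>_. w)) \<alpha> a = (\<Sum>\<gamma>\<in>mono_box n \<alpha>. ?L \<gamma> * tensor_deriv n (\<lambda>_. 1) (?d \<gamma>) a)"
    using pderiv_at_tensor_poly_mult[of n w "\<lambda>_. 1"] by simp
  have "pderiv_at n (witness n w f p g c) \<alpha> a = pderiv_at n (single_sum n w f) \<alpha> a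
      + pderiv_at n (pair_sum n w p g) \<alpha> a + c * pderiv_at n (triple_sum n w g) \<alpha> a
      - pderiv_at n (tensor_poly n (\<lambda>_. w)) \<alpha> a"
    by (simp add: witness_def single_sum_def pair_sum_def triple_sum_def)
  also have "\<dots> = (\<Sum>\<gamma>\<in>mono_box n \<alpha>. ?L \<gamma> * cofactor_deriv n f p g c (?d \<gamma>) a)"
    unfolding single pair triple one cofactor_deriv_def
    by (simp add: sum.distrib sum_subtractf sum_distrib_left algebra_simps)
  finally show ?thesis .
qed

text \<open>Each nonzero coordinate of a grid point is a root of \<open>w\<close>, so a Leibniz term survives only if
  it differentiates \<open>W\<close> at least once in each of these coordinates; this costs one order of
  derivative of \<open>Q\<close> per nonzero coordinate.\<close>

lemma witness_zero_mult_ge: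
  assumes roots: "\<And>i. i < n \<Longrightarrow> a i \<noteq> 0 \<Longrightarrow> poly w (a i) = 0"
    and cofactor: "\<And>\<beta>. is_mono n \<beta> \<Longrightarrow> mdeg n \<beta> + card {i. i < n \<and> a i \<noteq> 0} < k \<Longrightarrow>
      cofactor_deriv n f p g c \<beta> a = 0"
  shows "zero_mult_ge n (witness n w f p g c) k a"
  unfolding zero_mult_ge_def
proof (intro allI impI)
  fix \<alpha> assume \<alpha>: "is_mono n \<alpha>" "mdeg n \<alpha> < k"
  let ?T = "{i. i < n \<and> a i \<noteq> 0}"
  have "leibniz_coeff n w \<alpha> \<gamma> a * cofactor_deriv n f p g c (\<lambda>i. \<alpha> i - \<gamma> i) a = 0"
    if \<gamma>: "\<gamma> \<in> mono_box n \<alpha>" for \<gamma>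
  proof (cases "\<exists>i<n. a i \<noteq> 0 \<and> \<gamma> i = 0")
    case True
    then obtain i where "i < n" "a i \<noteq> 0" "\<gamma> i = 0" by auto
    then have "leibniz_coeff n w \<alpha> \<gamma> a = 0"
      unfolding leibniz_coeff_def using roots by (intro prod_zero) (auto intro!: bexI[of _ i])
    then show ?thesis by simp
  next
    case False
    have le: "\<gamma> i \<le> \<alpha> i" for i
      using \<gamma> \<alpha>(1) unfolding mono_box_def is_mono_def by (cases "i < n") auto
    have "card ?T = (\<Sum>i\<in>?T. 1)" by simp
    also have "\<dots> \<le> (\<Sum>i\<in>?T. \<gamma> i)" using False by (intro sum_mono) auto
    also have "\<dots> \<le> (\<Sum>i<n. \<gamma> i)" by (intro sum_mono2) auto
    finally have "card ?T \<le> (\<Sum>i<n. \<gamma> i)" .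
    moreover have "mdeg n (\<lambda>i. \<alpha> i - \<gamma> i) = mdeg n \<alpha> - (\<Sum>i<n. \<gamma> i)"
      unfolding mdeg_def using le by (simp add: sum_subtractf_nat)
    moreover have "(\<Sum>i<n. \<gamma> i) \<le> mdeg n \<alpha>"
      unfolding mdeg_def using le by (intro sum_mono) auto
    ultimately have "mdeg n (\<lambda>i. \<alpha> i - \<gamma> i) + card ?T < k" using \<alpha>(2) by linarith
    moreover have "is_mono n (\<lambda>i. \<alpha> i - \<gamma> i)" using \<alpha>(1) by (simp add: is_mono_def)
    ultimately show ?thesis using cofactor by simp
  qed
  then show "pderiv_at n (witness n w f p g c) \<alpha> a = 0"
    unfolding pderiv_at_witness by (intro sum.neutral ballI) blast
qed

section \<open>Derivatives of the cofactor at grid points\<close>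

lemma tensor_deriv_supported:
  assumes K: "K \<subseteq> {..<n}" and one: "\<And>l. l < n \<Longrightarrow> l \<notin> K \<Longrightarrow> q l = 1"
  shows "tensor_deriv n q \<beta> a =
    (if \<forall>l<n. l \<notin> K \<longrightarrow> \<beta> l = 0 then \<Prod>l\<in>K. hderiv (q l) (\<beta> l) (a l) else 0)"
proof -
  have "tensor_deriv n q \<beta> a =
      (\<Prod>l\<in>K. hderiv (q l) (\<beta> l) (a l)) * (\<Prod>l\<in>{..<n} - K. hderiv (q l) (\<beta> l) (a l))"
    unfolding tensor_deriv_def using K
    by (subst prod.subset_diff[of K]) (auto simp: mult.commute intro: finite_subset)
  also have "(\<Prod>l\<in>{..<n} - K. hderiv (q l) (\<beta> l) (a l)) = (\<Prod>l\<in>{..<n} - K. if \<beta> l = 0 then 1 else 0)"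
    using one by (intro prod.cong refl) (auto simp: hderiv_one)
  also have "\<dots> = (if \<forall>l<n. l \<notin> K \<longrightarrow> \<beta> l = 0 then 1 else 0)"
    by (auto simp: prod_zero_iff)
  finally show ?thesis by auto
qed

lemma tensor_deriv_at_coord:
  "i < n \<Longrightarrow> tensor_deriv n (at_coord i f) \<beta> a =
    (if \<forall>l<n. l \<noteq> i \<longrightarrow> \<beta> l = 0 then hderiv f (\<beta> i) (a i) else 0)"
  using tensor_deriv_supported[of "{i}" n "at_coord i f" \<beta> a] by (auto simp: at_coord_def)

lemma tensor_deriv_at_coord2:
  "i < n \<Longrightarrow> j < n \<Longrightarrow> i \<noteq> j \<Longrightarrow>
    tensor_deriv n (\<lambda>l. at_coord i f l * at_coord j g l) \<beta> a =
    (if \<forall>l<n. l \<noteq> i \<and> l \<noteq> j \<longrightarrow> \<beta> l = 0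
     then hderiv f (\<beta> i) (a i) * hderiv g (\<beta> j) (a j) else 0)"
  using tensor_deriv_supported[of "{i, j}" n "\<lambda>l. at_coord i f l * at_coord j g l" \<beta> a]
  by (auto simp: at_coord_def)

lemma tensor_deriv_at_coord3:
  "i < n \<Longrightarrow> j < n \<Longrightarrow> h < n \<Longrightarrow> i \<noteq> j \<Longrightarrow> i \<noteq> h \<Longrightarrow> j \<noteq> h \<Longrightarrow>
    tensor_deriv n (\<lambda>l. at_coord i g l * at_coord j g l * at_coord h g l) \<beta> a =
    (if \<forall>l<n. l \<noteq> i \<and> l \<noteq> j \<and> l \<noteq> h \<longrightarrow> \<beta> l = 0
     then hderiv g (\<beta> i) (a i) * hderiv g (\<beta> j) (a j) * hderiv g (\<beta> h) (a h) else 0)"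
  using tensor_deriv_supported[of "{i, j, h}" n "\<lambda>l. at_coord i g l * at_coord j g l * at_coord h g l" \<beta> a]
  by (auto simp: at_coord_def mult_ac)

lemma tensor_deriv_one: "tensor_deriv n (\<lambda>_. 1) \<beta> a = (if \<forall>l<n. \<beta> l = 0 then 1 else 0)"
  using tensor_deriv_supported[of "{}" n "\<lambda>_. 1" \<beta> a] by simp

definition unit_mono :: "nat \<Rightarrow> nat \<Rightarrow> mono" where
  "unit_mono q s = (\<lambda>l. if l = q then s else 0)"

lemma mdeg_unit_mono: "q < n \<Longrightarrow> mdeg n (unit_mono q s) = s"
  by (simp add: mdeg_def unit_mono_def)

lemma mdeg_unit_mono_add:
  "q < n \<Longrightarrow> q' < n \<Longrightarrow> q \<noteq> q' \<Longrightarrow> mdeg n (\<lambda>l. unit_mono q 1 l + unit_mono q' 1 l) = 2"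
  by (simp add: mdeg_def unit_mono_def sum.distrib)

lemma mono_mdeg_le_2_cases:
  assumes mono: "is_mono n \<beta>" and deg: "mdeg n \<beta> \<le> 2"
  obtains (zero) "\<beta> = (\<lambda>_. 0)"
  | (unit) q s where "q < n" "0 < s" "s \<le> 2" "\<beta> = unit_mono q s"
  | (pair) q q' where "q < n" "q' < n" "q \<noteq> q'" "\<beta> = (\<lambda>l. unit_mono q 1 l + unit_mono q' 1 l)"
proof -
  have le: "(\<Sum>i\<in>I. \<beta> i) \<le> 2" if "I \<subseteq> {..<n}" for I
    using deg sum_mono2[OF finite_lessThan that, of \<beta>] by (simp add: mdeg_def)
  consider "\<forall>i<n. \<beta> i = 0" | q where "q < n" "\<beta> q > 0" "\<forall>i<n. i \<noteq> q \<longrightarrow> \<beta> i = 0"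
    | q q' where "q < n" "q' < n" "q \<noteq> q'" "\<beta> q > 0" "\<beta> q' > 0" by blast
  then show thesis
  proof cases
    case 1
    then have "\<beta> = (\<lambda>_. 0)" using mono by (auto simp: is_mono_def fun_eq_iff not_less[symmetric])
    then show thesis by (rule that(1))
  next
    case (2 q)
    then have "\<beta> = unit_mono q (\<beta> q)"
      using mono by (auto simp: is_mono_def fun_eq_iff unit_mono_def not_less[symmetric])
    moreover have "\<beta> q \<le> 2" using le[of "{q}"] 2 by simp
    ultimately show thesis using 2 that(2) by blast
  next
    case (3 q q')
    have "\<beta> q + \<beta> q' \<le> 2" using le[of "{q, q'}"] 3 by simp
    moreover have "\<beta> l = 0" if "l < n" "l \<noteq> q" "l \<noteq> q'" for l
      using le[of "{q, q', l}"] 3 that by simp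
    ultimately have "\<beta> = (\<lambda>l. unit_mono q 1 l + unit_mono q' 1 l)"
      using 3 mono by (auto simp: is_mono_def fun_eq_iff unit_mono_def not_less[symmetric])
    then show thesis using 3 that(3) by blast
  qed
qed

lemma sum_if_eq_card_support:
  fixes F a :: "nat \<Rightarrow> real"
  assumes "\<And>i. i < n \<Longrightarrow> P i \<Longrightarrow> a i = 0 \<Longrightarrow> F i = 0"
    and "\<And>i. i < n \<Longrightarrow> P i \<Longrightarrow> a i \<noteq> 0 \<Longrightarrow> F i = v"
  shows "(\<Sum>i<n. if P i then F i else 0) = v * card {i. i < n \<and> a i \<noteq> 0 \<and> P i}"
proof -
  have "(\<Sum>i<n. if P i then F i else 0) = (\<Sum>i<n. if i \<in> {i. i < n \<and> a i \<noteq> 0 \<and> P i} then v else 0)"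
    using assms by (intro sum.cong refl) auto
  also have "\<dots> = (\<Sum>i\<in>{..<n} \<inter> {i. i < n \<and> a i \<noteq> 0 \<and> P i}. v)"
    by (rule sum.inter_restrict[symmetric]) simp
  also have "{..<n} \<inter> {i. i < n \<and> a i \<noteq> 0 \<and> P i} = {i. i < n \<and> a i \<noteq> 0 \<and> P i}" by auto
  finally show ?thesis by simp
qed

lemma card_support_remove:
  "q < n \<Longrightarrow> card {i. i < n \<and> a i \<noteq> 0 \<and> i \<noteq> q} =
    (if a q = 0 then card {i. i < n \<and> (a i :: real) \<noteq> 0} else card {i. i < n \<and> a i \<noteq> 0} - 1)"
  using card_Diff_singleton[of q "{i. i < n \<and> a i \<noteq> 0}"]
  by (cases "a q = 0") (auto intro!: arg_cong[where f = card] simp: set_diff_eq)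

lemma sum_distinct_pairs:
  fixes F G a :: "nat \<Rightarrow> real" and P :: "nat \<Rightarrow> bool"
  assumes F0: "\<And>i. i < n \<Longrightarrow> a i = 0 \<Longrightarrow> F i = 0" and F1: "\<And>i. i < n \<Longrightarrow> a i \<noteq> 0 \<Longrightarrow> F i = u"
    and G0: "\<And>i. i < n \<Longrightarrow> a i = 0 \<Longrightarrow> G i = 0" and G1: "\<And>i. i < n \<Longrightarrow> a i \<noteq> 0 \<Longrightarrow> G i = v"
  defines "r \<equiv> card {i. i < n \<and> a i \<noteq> 0 \<and> P i}"
  shows "(\<Sum>i<n. \<Sum>j<n. if P i \<and> P j \<and> i \<noteq> j then F i * G j else 0) = u * v * of_nat (r * (r - 1))"
proof -
  have inner: "(\<Sum>j<n. if P i \<and> P j \<and> i \<noteq> j then F i * G j else 0) =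
      (if P i then F i * (v * card {j. j < n \<and> a j \<noteq> 0 \<and> (P j \<and> j \<noteq> i)}) else 0)" for i
  proof -
    have "(\<Sum>j<n. if P i \<and> P j \<and> i \<noteq> j then F i * G j else 0) =
        (if P i then F i * (\<Sum>j<n. if P j \<and> j \<noteq> i then G j else 0) else 0)"
      by (cases "P i") (auto simp: sum_distrib_left intro!: sum.cong)
    also have "(\<Sum>j<n. if P j \<and> j \<noteq> i then G j else 0) = v * card {j. j < n \<and> a j \<noteq> 0 \<and> (P j \<and> j \<noteq> i)}"
      by (rule sum_if_eq_card_support) (use G0 G1 in auto)
    finally show ?thesis .
  qed
  have "(\<Sum>i<n. \<Sum>j<n. if P i \<and> P j \<and> i \<noteq> j then F i * G j else 0) =
      (\<Sum>i<n. if P i then F i * (v * card {j. j < n \<and> a j \<noteq> 0 \<and> (P j \<and> j \<noteq> i)}) else 0)"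
    by (simp only: inner)
  also have "\<dots> = u * (v * (r - 1)) * r"
    unfolding r_def
  proof (rule sum_if_eq_card_support)
    fix i assume i: "i < n" "P i" "a i \<noteq> 0"
    have "{j. j < n \<and> a j \<noteq> 0 \<and> (P j \<and> j \<noteq> i)} = {j. j < n \<and> a j \<noteq> 0 \<and> P j} - {i}" by auto
    then show "F i * (v * card {j. j < n \<and> a j \<noteq> 0 \<and> (P j \<and> j \<noteq> i)}) =
        u * (v * (card {i. i < n \<and> a i \<noteq> 0 \<and> P i} - 1))"
      using F1 i by (simp add: card_Diff_singleton)
  qed (use F0 in auto)
  finally show ?thesis by (simp add: mult_ac)
qed

lemma sum_distinct_triples:
  fixes F a :: "nat \<Rightarrow> real"
  assumes F0: "\<And>i. i < n \<Longrightarrow> a i = 0 \<Longrightarrow> F i = 0" and F1: "\<And>i. i < n \<Longrightarrow> a i \<noteq> 0 \<Longrightarrow> F i = 1"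
  defines "r \<equiv> card {i. i < n \<and> a i \<noteq> 0}"
  shows "(\<Sum>i<n. \<Sum>j<n. \<Sum>h<n. if i \<noteq> j \<and> i \<noteq> h \<and> j \<noteq> h then F i * F j * F h else 0) =
    of_nat (r * (r - 1) * (r - 2))"
proof -
  let ?r = "\<lambda>i. card {j. j < n \<and> a j \<noteq> 0 \<and> j \<noteq> i}"
  have inner: "(\<Sum>j<n. \<Sum>h<n. if i \<noteq> j \<and> i \<noteq> h \<and> j \<noteq> h then F i * F j * F h else 0) =
      F i * of_nat (?r i * (?r i - 1))" for i
  proof -
    have "(\<Sum>j<n. \<Sum>h<n. if i \<noteq> j \<and> i \<noteq> h \<and> j \<noteq> h then F i * F j * F h else 0) =
        F i * (\<Sum>j<n. \<Sum>h<n. if j \<noteq> i \<and> h \<noteq> i \<and> j \<noteq> h then F j * F h else 0)"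
      by (auto simp: sum_distrib_left intro!: sum.cong)
    also have "(\<Sum>j<n. \<Sum>h<n. if j \<noteq> i \<and> h \<noteq> i \<and> j \<noteq> h then F j * F h else 0) =
        1 * 1 * of_nat (?r i * (?r i - 1))"
      by (rule sum_distinct_pairs) (use F0 F1 in auto)
    finally show ?thesis by simp
  qed
  have "(\<Sum>i<n. \<Sum>j<n. \<Sum>h<n. if i \<noteq> j \<and> i \<noteq> h \<and> j \<noteq> h then F i * F j * F h else 0) =
      (\<Sum>i<n. if True then F i * of_nat (?r i * (?r i - 1)) else 0)"
    by (simp only: inner if_True)
  also have "\<dots> = real ((r - 1) * (r - 1 - 1)) * real (card {i. i < n \<and> a i \<noteq> 0 \<and> True})"
    by (rule sum_if_eq_card_support) (use F0 F1 card_support_remove[of _ n a] in \<open>auto simp: r_def\<close>)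
  finally show ?thesis by (simp add: r_def mult_ac diff_diff_add numeral_2_eq_2)
qed

lemma sum_if_const_cond: "(\<Sum>x\<in>A. if b then F x else 0) = (if b then sum F A else (0 :: real))"
  by simp

lemma single_deriv_zero:
  assumes "poly f 0 = 0" "\<And>i. i < n \<Longrightarrow> a i \<noteq> 0 \<Longrightarrow> poly f (a i) = u"
  shows "single_deriv n f (\<lambda>_. 0) a = u * card {i. i < n \<and> a i \<noteq> 0}"
proof -
  have "single_deriv n f (\<lambda>_. 0) a = (\<Sum>i<n. if True then poly f (a i) else 0)"
    unfolding single_deriv_def by (intro sum.cong refl) (simp add: tensor_deriv_at_coord)
  also have "\<dots> = u * card {i. i < n \<and> a i \<noteq> 0 \<and> True}"
    by (rule sum_if_eq_card_support) (use assms in auto)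
  finally show ?thesis by simp
qed

lemma single_deriv_unit_mono:
  assumes "q < n" "s > 0"
  shows "single_deriv n f (unit_mono q s) a = hderiv f s (a q)"
proof -
  have "single_deriv n f (unit_mono q s) a = (\<Sum>i<n. if i = q then hderiv f s (a q) else 0)"
    unfolding single_deriv_def using assms
    by (intro sum.cong refl) (auto simp: tensor_deriv_at_coord unit_mono_def)
  then show ?thesis using assms by simp
qed

lemma single_deriv_unit_mono_add:
  assumes "q < n" "q' < n" "q \<noteq> q'"
  shows "single_deriv n f (\<lambda>l. unit_mono q 1 l + unit_mono q' 1 l) a = 0"
  unfolding single_deriv_def using assms
  by (intro sum.neutral ballI) (auto simp: tensor_deriv_at_coord unit_mono_def)

lemma pair_deriv_zero:
  assumes "poly p 0 = 0" "poly g 0 = 0"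
    "\<And>i. i < n \<Longrightarrow> a i \<noteq> 0 \<Longrightarrow> poly p (a i) = v" "\<And>i. i < n \<Longrightarrow> a i \<noteq> 0 \<Longrightarrow> poly g (a i) = 1"
  defines "r \<equiv> card {i. i < n \<and> a i \<noteq> 0}"
  shows "pair_deriv n p g (\<lambda>_. 0) a = v * of_nat (r * (r - 1))"
proof -
  have "pair_deriv n p g (\<lambda>_. 0) a =
      (\<Sum>i<n. \<Sum>j<n. if True \<and> True \<and> i \<noteq> j then poly p (a i) * poly g (a j) else 0)"
    unfolding pair_deriv_def by (intro sum.cong refl) (auto simp: tensor_deriv_at_coord2)
  also have "\<dots> = v * 1 * of_nat (card {i. i < n \<and> a i \<noteq> 0 \<and> True} *
      (card {i. i < n \<and> a i \<noteq> 0 \<and> True} - 1))"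
    by (rule sum_distinct_pairs) (use assms in auto)
  finally show ?thesis by (simp add: r_def)
qed

lemma pair_deriv_unit_mono:
  assumes "q < n" "s > 0" "poly p 0 = 0" "poly g 0 = 0"
    "\<And>i. i < n \<Longrightarrow> a i \<noteq> 0 \<Longrightarrow> poly p (a i) = v" "\<And>i. i < n \<Longrightarrow> a i \<noteq> 0 \<Longrightarrow> poly g (a i) = 1"
  shows "pair_deriv n p g (unit_mono q s) a =
    (hderiv p s (a q) + v * hderiv g s (a q)) * card {i. i < n \<and> a i \<noteq> 0 \<and> i \<noteq> q}"
proof -
  let ?X = "\<lambda>j. if j \<noteq> q then hderiv p s (a q) * poly g (a j) else 0"
  let ?Y = "\<lambda>i. if i \<noteq> q then poly p (a i) * hderiv g s (a q) else 0"
  have "pair_deriv n p g (unit_mono q s) a =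
      (\<Sum>i<n. \<Sum>j<n. (if i = q then ?X j else 0) + (if j = q then ?Y i else 0))"
    unfolding pair_deriv_def using assms(1,2)
    by (intro sum.cong refl) (auto simp: tensor_deriv_at_coord2 unit_mono_def)
  also have "\<dots> = (\<Sum>j<n. ?X j) + (\<Sum>i<n. ?Y i)"
    using assms(1) by (simp only: sum.distrib sum_if_const_cond sum.delta) simp
  also have "(\<Sum>j<n. ?X j) = hderiv p s (a q) * 1 * card {i. i < n \<and> a i \<noteq> 0 \<and> i \<noteq> q}"
    by (rule sum_if_eq_card_support) (use assms in auto)
  also have "(\<Sum>i<n. ?Y i) = v * hderiv g s (a q) * card {i. i < n \<and> a i \<noteq> 0 \<and> i \<noteq> q}"
    by (rule sum_if_eq_card_support) (use assms in auto)
  finally show ?thesis by (simp add: algebra_simps)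
qed

lemma pair_deriv_unit_mono_add:
  assumes "q < n" "q' < n" "q \<noteq> q'"
  shows "pair_deriv n p g (\<lambda>l. unit_mono q 1 l + unit_mono q' 1 l) a =
    hderiv p 1 (a q) * hderiv g 1 (a q') + hderiv p 1 (a q') * hderiv g 1 (a q)"
proof -
  let ?A = "hderiv p 1 (a q) * hderiv g 1 (a q')" and ?B = "hderiv p 1 (a q') * hderiv g 1 (a q)"
  have "pair_deriv n p g (\<lambda>l. unit_mono q 1 l + unit_mono q' 1 l) a = (\<Sum>i<n. \<Sum>j<n.
      (if i = q then if j = q' then ?A else 0 else 0) + (if i = q' then if j = q then ?B else 0 else 0))"
    unfolding pair_deriv_def using assms
    by (intro sum.cong refl) (auto simp: tensor_deriv_at_coord2 unit_mono_def)
  also have "\<dots> = ?A + ?B"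
    using assms by (simp add: sum.distrib sum_if_const_cond)
  finally show ?thesis .
qed

lemma triple_deriv_zero:
  assumes "poly g 0 = 0" "\<And>i. i < n \<Longrightarrow> a i \<noteq> 0 \<Longrightarrow> poly g (a i) = 1"
  defines "r \<equiv> card {i. i < n \<and> a i \<noteq> 0}"
  shows "triple_deriv n g (\<lambda>_. 0) a = of_nat (r * (r - 1) * (r - 2))"
proof -
  have "triple_deriv n g (\<lambda>_. 0) a = (\<Sum>i<n. \<Sum>j<n. \<Sum>h<n. if i \<noteq> j \<and> i \<noteq> h \<and> j \<noteq> h
      then poly g (a i) * poly g (a j) * poly g (a h) else 0)"
    unfolding triple_deriv_def by (intro sum.cong refl) (auto simp: tensor_deriv_at_coord3)
  also have "\<dots> = of_nat (r * (r - 1) * (r - 2))"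
    unfolding r_def by (rule sum_distinct_triples) (use assms in auto)
  finally show ?thesis .
qed

lemma triple_deriv_unit_mono:
  assumes "q < n" "s > 0" "poly g 0 = 0" "\<And>i. i < n \<Longrightarrow> a i \<noteq> 0 \<Longrightarrow> poly g (a i) = 1"
  defines "r \<equiv> card {i. i < n \<and> a i \<noteq> 0 \<and> i \<noteq> q}"
  shows "triple_deriv n g (unit_mono q s) a = 3 * hderiv g s (a q) * of_nat (r * (r - 1))"
proof -
  let ?E = "hderiv g s (a q)"
  define Y where "Y u v = (if u \<noteq> q \<and> v \<noteq> q \<and> u \<noteq> v then poly g (a u) * poly g (a v) else 0)" for u v
  have "triple_deriv n g (unit_mono q s) a = (\<Sum>i<n. \<Sum>j<n. \<Sum>h<n. (if i = q then ?E * Y j h else 0)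
      + (if j = q then ?E * Y i h else 0) + (if h = q then ?E * Y i j else 0))"
    unfolding triple_deriv_def Y_def using assms(1,2)
    by (intro sum.cong refl) (auto simp: tensor_deriv_at_coord3 unit_mono_def; simp add: mult_ac)
  also have "\<dots> = 3 * (\<Sum>i<n. \<Sum>j<n. ?E * Y i j)"
    using assms(1) by (simp only: sum.distrib sum_if_const_cond sum.delta) simp
  also have "(\<Sum>i<n. \<Sum>j<n. Y i j) = 1 * 1 * of_nat (r * (r - 1))"
    unfolding Y_def r_def by (rule sum_distinct_pairs[where P = "\<lambda>u. u \<noteq> q"]) (use assms in auto)
  then have "(\<Sum>i<n. \<Sum>j<n. ?E * Y i j) = ?E * of_nat (r * (r - 1))"
    by (simp add: sum_distrib_left[symmetric])
  finally show ?thesis by simp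
qed

lemma triple_deriv_unit_mono_add:
  assumes "q < n" "q' < n" "q \<noteq> q'" "poly g 0 = 0" "\<And>i. i < n \<Longrightarrow> a i \<noteq> 0 \<Longrightarrow> poly g (a i) = 1"
  shows "triple_deriv n g (\<lambda>l. unit_mono q 1 l + unit_mono q' 1 l) a =
    6 * (hderiv g 1 (a q) * hderiv g 1 (a q')) * card {i. i < n \<and> a i \<noteq> 0 \<and> i \<noteq> q \<and> i \<noteq> q'}"
proof -
  let ?E = "hderiv g 1 (a q) * hderiv g 1 (a q')"
  define Z where "Z u = (if u \<noteq> q \<and> u \<noteq> q' then ?E * poly g (a u) else 0)" for u
  have "triple_deriv n g (\<lambda>l. unit_mono q 1 l + unit_mono q' 1 l) a = (\<Sum>i<n. \<Sum>j<n. \<Sum>h<n.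
      (if i = q then if j = q' then Z h else 0 else 0) + (if i = q' then if j = q then Z h else 0 else 0) +
      (if i = q then if h = q' then Z j else 0 else 0) + (if i = q' then if h = q then Z j else 0 else 0) +
      (if j = q then if h = q' then Z i else 0 else 0) + (if j = q' then if h = q then Z i else 0 else 0))"
    unfolding triple_deriv_def Z_def using assms(1-3)
    by (intro sum.cong refl) (auto simp: tensor_deriv_at_coord3 unit_mono_def; simp add: mult_ac)
  also have "\<dots> = 6 * (\<Sum>h<n. Z h)"
    using assms(1,2) by (simp only: sum.distrib sum_if_const_cond sum.delta) simp
  also have "(\<Sum>h<n. Z h) = ?E * 1 * card {i. i < n \<and> a i \<noteq> 0 \<and> (i \<noteq> q \<and> i \<noteq> q')}"
    unfolding Z_def by (rule sum_if_eq_card_support) (use assms in auto)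
  finally show ?thesis by simp
qed

context
  fixes n :: nat and a :: "nat \<Rightarrow> real" and f p g :: "real poly" and v :: real
  assumes at_0: "poly f 0 = 0" "poly p 0 = 0" "poly g 0 = 0"
    and on_support: "\<And>i. i < n \<Longrightarrow> a i \<noteq> 0 \<Longrightarrow> poly f (a i) = 1"
      "\<And>i. i < n \<Longrightarrow> a i \<noteq> 0 \<Longrightarrow> poly p (a i) = v"
      "\<And>i. i < n \<Longrightarrow> a i \<noteq> 0 \<Longrightarrow> poly g (a i) = 1"
begin

lemma cofactor_deriv_zero:
  defines "r \<equiv> card {i. i < n \<and> a i \<noteq> 0}"
  shows "cofactor_deriv n f p g c (\<lambda>_. 0) a =
    r + v * of_nat (r * (r - 1)) + c * of_nat (r * (r - 1) * (r - 2)) - 1"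
  using single_deriv_zero[of f n a 1] pair_deriv_zero[of p g n a v] triple_deriv_zero[of g n a]
    at_0 on_support
  by (simp add: cofactor_deriv_def tensor_deriv_one r_def)

lemma cofactor_deriv_unit_mono:
  assumes "q < n" "s > 0"
  defines "r \<equiv> card {i. i < n \<and> a i \<noteq> 0 \<and> i \<noteq> q}"
  shows "cofactor_deriv n f p g c (unit_mono q s) a = hderiv f s (a q)
    + (hderiv p s (a q) + v * hderiv g s (a q)) * r + 3 * c * hderiv g s (a q) * of_nat (r * (r - 1))"
proof -
  have "tensor_deriv n (\<lambda>_. 1) (unit_mono q s) a = 0"
    using assms(1,2) by (auto simp: tensor_deriv_one unit_mono_def)
  then show ?thesis
    using single_deriv_unit_mono[OF assms(1,2), of f a] pair_deriv_unit_mono[OF assms(1,2), of p g a v]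
      triple_deriv_unit_mono[OF assms(1,2), of g a] at_0 on_support
    by (simp add: cofactor_deriv_def r_def)
qed

lemma cofactor_deriv_unit_mono_add:
  assumes "q < n" "q' < n" "q \<noteq> q'"
  shows "cofactor_deriv n f p g c (\<lambda>l. unit_mono q 1 l + unit_mono q' 1 l) a =
    hderiv p 1 (a q) * hderiv g 1 (a q') + hderiv p 1 (a q') * hderiv g 1 (a q)
    + 6 * c * (hderiv g 1 (a q) * hderiv g 1 (a q')) * card {i. i < n \<and> a i \<noteq> 0 \<and> i \<noteq> q \<and> i \<noteq> q'}"
proof -
  have "tensor_deriv n (\<lambda>_. 1) (\<lambda>l. unit_mono q 1 l + unit_mono q' 1 l) a = 0"
    using assms(1) by (auto simp: tensor_deriv_one unit_mono_def)
  then show ?thesis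
    using single_deriv_unit_mono_add[OF assms, of f a] pair_deriv_unit_mono_add[OF assms, of p g a]
      triple_deriv_unit_mono_add[OF assms, of g a] at_0 on_support
    by (simp add: cofactor_deriv_def)
qed

end

lemmas cofactor_derivs = cofactor_deriv_zero cofactor_deriv_unit_mono cofactor_deriv_unit_mono_add

section \<open>The univariate building blocks\<close>

definition u_poly :: "nat \<Rightarrow> real poly" where
  "u_poly m = (\<Prod>t\<in>{1..m}. [:1, - 1 / real t:])"

definition sigma_u :: "nat \<Rightarrow> real" where
  "sigma_u m = poly (pderiv (u_poly m)) 0"

definition tau_u :: "nat \<Rightarrow> real" where
  "tau_u m = poly (pderiv (pderiv (u_poly m))) 0"

lemma u_poly_Suc: "u_poly (Suc m) = u_poly m * [:1, - 1 / real (Suc m):]"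
  unfolding u_poly_def by (simp add: prod.nat_ivl_Suc' mult.commute)

lemma poly_u_poly_0 [simp]: "poly (u_poly m) 0 = 1"
  by (simp add: u_poly_def poly_prod)

lemma linear_dvd_u_poly:
  assumes "t \<in> {1..m}"
  shows "[:- real t, 1:] dvd u_poly m"
proof -
  have "[:1, - 1 / real t:] = [:- real t, 1:] * [:- 1 / real t:]"
    using assms by simp
  then have "[:- real t, 1:] dvd [:1, - 1 / real t:]" by (metis dvd_triv_left)
  also have "\<dots> dvd u_poly m"
    unfolding u_poly_def using assms by (intro dvd_prodI) auto
  finally show ?thesis .
qed

lemma poly_u_poly_grid: "t \<in> {1..m} \<Longrightarrow> poly (u_poly m) (real t) = 0"
  using linear_dvd_u_poly[of t m] by (simp add: dvd_iff_poly_eq_0)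

lemma degree_u_poly: "degree (u_poly m) = m"
  unfolding u_poly_def by (subst degree_prod_eq_sum_degree) auto

lemma lead_coeff_u_poly_nonzero: "lead_coeff (u_poly m) \<noteq> 0"
  unfolding u_poly_def by (simp add: lead_coeff_prod)

lemma u_poly_nonzero: "u_poly m \<noteq> 0"
  using lead_coeff_u_poly_nonzero[of m] by auto

text \<open>With \<open>u = u_m\<close> and \<open>c = 1 / (m + 1)\<close>, the product rule gives \<open>u_(m+1)'(0) = u'(0) - c\<close> and
  \<open>u_(m+1)''(0) = u''(0) - 2 c u'(0)\<close>, which preserves the invariant below.\<close>

lemma sigma_tau_u:
  "sigma_u m \<le> 0 \<and> tau_u m \<le> (sigma_u m)\<^sup>2 \<and> (m \<ge> 1 \<longrightarrow> sigma_u m < 0)"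
proof (induction m)
  case 0
  then show ?case by (simp add: sigma_u_def tau_u_def u_poly_def)
next
  case (Suc m)
  define c where "c = 1 / real (Suc m)"
  have c: "c > 0" by (simp add: c_def)
  have "u_poly (Suc m) = u_poly m * [:1, - c:]"
    by (simp add: u_poly_Suc c_def)
  moreover have "pderiv [:1, - c:] = [:- c:]"
    by (simp add: pderiv_pCons)
  ultimately have d1: "pderiv (u_poly (Suc m)) = u_poly m * [:- c:] + [:1, - c:] * pderiv (u_poly m)"
    by (simp only: pderiv_mult)
  have "sigma_u (Suc m) = sigma_u m - c"
    unfolding sigma_u_def d1 by simp
  moreover have "tau_u (Suc m) = tau_u m - 2 * c * sigma_u m"
    unfolding tau_u_def sigma_u_def d1 by (simp add: pderiv_add pderiv_diff pderiv_minus pderiv_smult pderiv_pCons)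
  moreover have "tau_u m - 2 * c * sigma_u m \<le> (sigma_u m - c)\<^sup>2"
  proof -
    have "(sigma_u m - c)\<^sup>2 = (sigma_u m)\<^sup>2 - 2 * c * sigma_u m + c\<^sup>2"
      by (simp add: power2_diff algebra_simps)
    then show ?thesis using Suc.IH zero_le_power2[of c] by linarith
  qed
  ultimately show ?case using Suc.IH c by simp
qed

lemma sigma_u_neg: "m \<ge> 1 \<Longrightarrow> sigma_u m < 0"
  using sigma_tau_u[of m] by simp

lemma tau_u_sigma_u: "m \<ge> 1 \<Longrightarrow> tau_u m / 2 - 2 * (sigma_u m)\<^sup>2 \<noteq> 0"
  using sigma_tau_u[of m] zero_less_power2[of "sigma_u m"] by linarith

lemma poly_pderiv_u_poly_0 [simp]: "poly (pderiv (u_poly m)) 0 = sigma_u m"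
  by (simp add: sigma_u_def)

lemma poly_pderiv2_u_poly_0 [simp]: "poly (pderiv (pderiv (u_poly m))) 0 = tau_u m"
  by (simp add: tau_u_def)

lemma hderiv_u_poly_power_mult_grid:
  assumes "t \<in> {1..m}" "s < j"
  shows "hderiv (u_poly m ^ j * X) s (real t) = 0"
  using linear_dvd_u_poly[OF assms(1)] assms(2)
  by (intro hderiv_eq_0_at_multiple_root[of _ j]) (auto intro: dvd_mult2 dvd_power_same)

text \<open>Each building block minus its value at the grid points \<open>1, ..., m\<close> is divisible by a power
  of \<open>u\<close>; the remaining coefficients are tuned so that the derivatives of the cofactor cancel at
  coordinates equal to \<open>0\<close>.\<close>

definition e_poly :: "nat \<Rightarrow> real poly" where
  "e_poly m = 1 - u_poly m"

definition f3_poly :: "nat \<Rightarrow> real poly" where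
  "f3_poly m = 1 + u_poly m ^ 2 * [:- 1, sigma_u m:]"

definition f4_poly :: "nat \<Rightarrow> real poly" where
  "f4_poly m = 1 + u_poly m ^ 3 * [:- 1, 2 * sigma_u m, tau_u m / 2 - 2 * (sigma_u m)\<^sup>2:]"

definition p3_poly :: "nat \<Rightarrow> real poly" where
  "p3_poly m = smult (- 1 / 2) (e_poly m)"

definition p4_poly :: "nat \<Rightarrow> real poly" where
  "p4_poly m = [:- 1 / 2:] - smult (1 / 2) (u_poly m) + u_poly m ^ 2 * [:1, - sigma_u m:]"

lemmas pderiv_simps = pderiv_add pderiv_minus pderiv_diff pderiv_mult pderiv_smult pderiv_pCons

lemma poly_e_poly_0 [simp]: "poly (e_poly m) 0 = 0"
  by (simp add: e_poly_def)

lemma poly_e_poly_grid: "t \<in> {1..m} \<Longrightarrow> poly (e_poly m) (real t) = 1"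
  by (simp add: e_poly_def poly_u_poly_grid)

lemma hderiv_e_poly: "s > 0 \<Longrightarrow> hderiv (e_poly m) s x = - hderiv (u_poly m) s x"
  by (simp add: e_poly_def hderiv_diff hderiv_one)

lemma hderiv_e_poly_0: "hderiv (e_poly m) 1 0 = - sigma_u m" "hderiv (e_poly m) 2 0 = - tau_u m"
  unfolding e_poly_def hderiv_1 hderiv_2 by (simp_all add: pderiv_simps)

lemma poly_f3_poly_0 [simp]: "poly (f3_poly m) 0 = 0"
  by (simp add: f3_poly_def)

lemma hderiv_f3_poly_grid:
  "t \<in> {1..m} \<Longrightarrow> s < 2 \<Longrightarrow> hderiv (f3_poly m) s (real t) = (if s = 0 then 1 else 0)"
  unfolding f3_poly_def hderiv_add hderiv_one
  using hderiv_u_poly_power_mult_grid[of t m s 2 "[:- 1, sigma_u m:]"] by simp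

lemma hderiv_f3_poly_0: "hderiv (f3_poly m) 1 0 = - sigma_u m"
  unfolding f3_poly_def hderiv_1 by (simp add: pderiv_simps power2_eq_square algebra_simps)

lemma poly_f4_poly_0 [simp]: "poly (f4_poly m) 0 = 0"
  by (simp add: f4_poly_def)

lemma hderiv_f4_poly_grid:
  "t \<in> {1..m} \<Longrightarrow> s < 3 \<Longrightarrow> hderiv (f4_poly m) s (real t) = (if s = 0 then 1 else 0)"
  unfolding f4_poly_def hderiv_add hderiv_one
  using hderiv_u_poly_power_mult_grid[of t m s 3 "[:- 1, 2 * sigma_u m, tau_u m / 2 - 2 * (sigma_u m)\<^sup>2:]"]
  by simp

lemma hderiv_f4_poly_0:
  "hderiv (f4_poly m) 1 0 = - sigma_u m" "hderiv (f4_poly m) 2 0 = 2 * (sigma_u m)\<^sup>2 - 2 * tau_u m"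
  unfolding f4_poly_def hderiv_1 hderiv_2 by (simp_all add: pderiv_simps power2_eq_square power3_eq_cube algebra_simps)

lemma poly_p3_poly_0 [simp]: "poly (p3_poly m) 0 = 0"
  by (simp add: p3_poly_def)

lemma poly_p3_poly_grid: "t \<in> {1..m} \<Longrightarrow> poly (p3_poly m) (real t) = - 1 / 2"
  by (simp add: p3_poly_def poly_e_poly_grid)

lemma hderiv_p3_poly: "hderiv (p3_poly m) s x = - 1 / 2 * hderiv (e_poly m) s x"
  by (simp only: p3_poly_def hderiv_smult)

lemma poly_p4_poly_0 [simp]: "poly (p4_poly m) 0 = 0"
  by (simp add: p4_poly_def)

lemma poly_p4_poly_grid: "t \<in> {1..m} \<Longrightarrow> poly (p4_poly m) (real t) = - 1 / 2"
  by (simp add: p4_poly_def poly_u_poly_grid)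

lemma hderiv_p4_poly_grid:
  "t \<in> {1..m} \<Longrightarrow> hderiv (p4_poly m) 1 (real t) = hderiv (e_poly m) 1 (real t) / 2"
  using hderiv_u_poly_power_mult_grid[of t m 1 2 "[:1, - sigma_u m:]"]
  by (simp add: p4_poly_def hderiv_add hderiv_diff hderiv_smult hderiv_const hderiv_e_poly)

lemma hderiv_p4_poly_0:
  "hderiv (p4_poly m) 1 0 = sigma_u m / 2" "hderiv (p4_poly m) 2 0 = 3 / 2 * tau_u m - 2 * (sigma_u m)\<^sup>2"
  unfolding p4_poly_def hderiv_1 hderiv_2 by (simp_all add: pderiv_simps power2_eq_square algebra_simps)

lemma degree_e_poly: "m \<ge> 1 \<Longrightarrow> degree (e_poly m) = m"
proof -
  assume "m \<ge> 1"
  have "e_poly m = - u_poly m + 1" by (simp add: e_poly_def)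
  also have "degree \<dots> = degree (- u_poly m)"
    using \<open>m \<ge> 1\<close> by (intro degree_add_eq_left) (simp add: degree_u_poly)
  finally show ?thesis by (simp add: degree_u_poly)
qed

lemma degree_u_poly_power_mult:
  assumes "q \<noteq> 0"
  shows "degree (u_poly m ^ j * q) = j * m + degree q"
  using assms u_poly_nonzero[of m] by (simp add: degree_mult_eq degree_power_eq degree_u_poly)

lemma degree_f3_poly: "m \<ge> 1 \<Longrightarrow> degree (f3_poly m) = 2 * m + 1"
proof -
  assume "m \<ge> 1"
  then have "degree (u_poly m ^ 2 * [:- 1, sigma_u m:]) = 2 * m + 1"
    using sigma_u_neg[of m] by (subst degree_u_poly_power_mult) auto
  then show ?thesis
    unfolding f3_poly_def by (subst degree_add_eq_right) simp_all
qed

lemma degree_f4_poly: "m \<ge> 1 \<Longrightarrow> degree (f4_poly m) = 3 * m + 2"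
proof -
  assume "m \<ge> 1"
  then have "degree (u_poly m ^ 3 * [:- 1, 2 * sigma_u m, tau_u m / 2 - 2 * (sigma_u m)\<^sup>2:]) = 3 * m + 2"
    using tau_u_sigma_u[of m] by (subst degree_u_poly_power_mult) auto
  then show ?thesis
    unfolding f4_poly_def by (subst degree_add_eq_right) simp_all
qed

lemma degree_p3_poly: "m \<ge> 1 \<Longrightarrow> degree (p3_poly m) \<le> m"
  unfolding p3_poly_def using degree_e_poly[of m] degree_smult_le[of "- 1 / 2" "e_poly m"] by simp

lemma degree_p4_poly: "degree (p4_poly m) \<le> 2 * m + 1"
proof -
  have "degree (u_poly m ^ 2 * [:1, - sigma_u m:]) \<le> 2 * m + 1"
    using degree_u_poly_power_mult[of "[:1, - sigma_u m:]" m 2] by simp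
  moreover have "degree ([:- 1 / 2:] - smult (1 / 2) (u_poly m)) \<le> 2 * m + 1"
    using degree_diff_le[of "[:- 1 / 2:]" "2 * m + 1" "smult (1 / 2) (u_poly m)"]
    by (simp add: degree_u_poly)
  ultimately show ?thesis unfolding p4_poly_def by (intro degree_add_le)
qed

section \<open>Vanishing of the cofactor derivatives\<close>

definition grid_point :: "nat \<Rightarrow> nat \<Rightarrow> (nat \<Rightarrow> real) \<Rightarrow> bool" where
  "grid_point m n a \<longleftrightarrow> (\<forall>i<n. a i \<noteq> 0 \<longrightarrow> (\<exists>t\<in>{1..m}. a i = real t))"

context
  fixes m n :: nat and a :: "nat \<Rightarrow> real"
  assumes grid: "grid_point m n a"
begin

lemma grid_coordE:
  assumes "i < n" "a i \<noteq> 0"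
  obtains t where "t \<in> {1..m}" "a i = real t"
  using grid assms unfolding grid_point_def by blast

lemma grid_values:
  assumes "i < n" "a i \<noteq> 0"
  shows "poly (e_poly m) (a i) = 1" "poly (f3_poly m) (a i) = 1" "poly (f4_poly m) (a i) = 1"
    "poly (p3_poly m) (a i) = - 1 / 2" "poly (p4_poly m) (a i) = - 1 / 2"
  using assms hderiv_f3_poly_grid[of _ m 0] hderiv_f4_poly_grid[of _ m 0]
  by (auto elim!: grid_coordE simp: poly_e_poly_grid poly_p3_poly_grid poly_p4_poly_grid)

lemma cofactor2_vanishes:
  assumes "is_mono n \<beta>" "mdeg n \<beta> + card {i. i < n \<and> a i \<noteq> 0} < 2"
    and "card {i. i < n \<and> a i \<noteq> 0} \<ge> 1"
  shows "cofactor_deriv n (e_poly m) 0 (e_poly m) 0 \<beta> a = 0"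
proof -
  have "mdeg n \<beta> = 0" using assms by linarith
  then have "\<forall>i<n. \<beta> i = 0" by (simp add: mdeg_def)
  then have "\<beta> = (\<lambda>_. 0)" using assms(1) unfolding is_mono_def fun_eq_iff by (metis not_le)
  moreover have "card {i. i < n \<and> a i \<noteq> 0} = 1" using assms by simp
  ultimately show ?thesis
    using cofactor_deriv_zero[of "e_poly m" 0 "e_poly m" n a 0 0] grid_values by simp
qed

lemma cofactor3_vanishes:
  assumes mono: "is_mono n \<beta>" and deg: "mdeg n \<beta> + card {i. i < n \<and> a i \<noteq> 0} < 3"
    and r1: "card {i. i < n \<and> a i \<noteq> 0} \<ge> 1"
  shows "cofactor_deriv n (f3_poly m) (p3_poly m) (e_poly m) 0 \<beta> a = 0"
proof -
  let ?r = "card {i. i < n \<and> a i \<noteq> 0}"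
  note cofactor = cofactor_derivs[where n = n and a = a and f = "f3_poly m" and p = "p3_poly m"
      and g = "e_poly m" and v = "- 1 / 2" and c = 0, OF _ _ _ grid_values(2) grid_values(4) grid_values(1)]
  have "mdeg n \<beta> \<le> 2" using deg r1 by simp
  with mono show ?thesis
  proof (cases rule: mono_mdeg_le_2_cases)
    case zero
    have "?r \<in> {1, 2}" using deg r1 by auto
    then show ?thesis unfolding zero using cofactor(1) by auto
  next
    case (unit q s)
    then have s: "s = 1" "?r = 1" using deg r1 by (auto simp: mdeg_unit_mono)
    show ?thesis
    proof (cases "a q = 0")
      case True
      then have "card {i. i < n \<and> a i \<noteq> 0 \<and> i \<noteq> q} = 1"
        using card_support_remove[of q n a] s unit by simp
      then show ?thesis
        using cofactor(2)[of q s] unit s True hderiv_f3_poly_0 hderiv_e_poly_0(1)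
        by (simp add: hderiv_p3_poly)
    next
      case False
      then obtain t where t: "t \<in> {1..m}" "a q = real t" using unit by (blast elim: grid_coordE)
      have "card {i. i < n \<and> a i \<noteq> 0 \<and> i \<noteq> q} = 0"
        using card_support_remove[of q n a] s unit False by simp
      then show ?thesis
        using cofactor(2)[of q s] unit s t hderiv_f3_poly_grid[OF t(1), of 1] by simp
    qed
  next
    case (pair q q')
    then have "mdeg n \<beta> = 2" using mdeg_unit_mono_add[of q n q'] by simp
    then show ?thesis using deg r1 by simp
  qed
qed

lemmas cofactor4_derivs = cofactor_derivs[where n = n and a = a and f = "f4_poly m" and p = "p4_poly m"
    and g = "e_poly m" and v = "- 1 / 2" and c = "1 / 6", OF _ _ _ grid_values(3) grid_values(5) grid_values(1)]

lemma cofactor4_unit_mono: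
  assumes q: "q < n" and s: "0 < s" "s + card {i. i < n \<and> a i \<noteq> 0} < 4"
    and r1: "card {i. i < n \<and> a i \<noteq> 0} \<ge> 1"
  shows "cofactor_deriv n (f4_poly m) (p4_poly m) (e_poly m) (1 / 6) (unit_mono q s) a = 0"
proof -
  let ?r = "card {i. i < n \<and> a i \<noteq> 0}"
  let ?rq = "card {i. i < n \<and> a i \<noteq> 0 \<and> i \<noteq> q}"
  have cases_s: "s = 1 \<and> ?r \<in> {1, 2} \<or> s = 2 \<and> ?r = 1" using s r1 by auto
  note val = cofactor4_derivs(2)[of q s] q s(1)
  show ?thesis
  proof (cases "a q = 0")
    case True
    then have "?rq = ?r" using card_support_remove[OF q, of a] by simp
    then show ?thesis
      using val cases_s True hderiv_f4_poly_0[of m] hderiv_p4_poly_0[of m] hderiv_e_poly_0[of m]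
      by (auto simp: field_simps)
  next
    case False
    then obtain t where t: "t \<in> {1..m}" "a q = real t" using q by (blast elim: grid_coordE)
    then have "?rq = ?r - 1" using card_support_remove[OF q, of a] False by simp
    then show ?thesis
      using val cases_s t hderiv_f4_poly_grid[OF t(1), of s] hderiv_p4_poly_grid[OF t(1)]
      by (auto simp: field_simps)
  qed
qed

lemma cofactor4_unit_mono_add:
  assumes q: "q < n" "q' < n" "q \<noteq> q'" and r: "card {i. i < n \<and> a i \<noteq> 0} = 1"
  shows "cofactor_deriv n (f4_poly m) (p4_poly m) (e_poly m) (1 / 6)
    (\<lambda>l. unit_mono q 1 l + unit_mono q' 1 l) a = 0"
proof -
  obtain j where j: "{i. i < n \<and> a i \<noteq> 0} = {j}" using r card_1_singletonE by blast
  have "{i. i < n \<and> a i \<noteq> 0 \<and> i \<noteq> q \<and> i \<noteq> q'} = (if j = q \<or> j = q' then {} else {j})"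
    using j by auto
  then have card: "card {i. i < n \<and> a i \<noteq> 0 \<and> i \<noteq> q \<and> i \<noteq> q'} = (if j = q \<or> j = q' then 0 else 1)"
    by simp
  note val = cofactor4_derivs(3)[of q q'] q
  note at_0 = hderiv_p4_poly_0(1)[of m] hderiv_e_poly_0(1)[of m]
  have zero: "a l = 0 \<longleftrightarrow> l \<noteq> j" if "l < n" for l using j that by blast
  let ?D = "cofactor_deriv n (f4_poly m) (p4_poly m) (e_poly m) (1 / 6) (\<lambda>l. unit_mono q 1 l + unit_mono q' 1 l) a"
  consider "j = q" | "j = q'" | "j \<noteq> q" "j \<noteq> q'" by blast
  then show ?thesis
  proof cases
    case 1
    then obtain t where t: "t \<in> {1..m}" "a q = real t" using q zero by (blast elim: grid_coordE)
    have "?D = hderiv (p4_poly m) 1 (real t) * hderiv (e_poly m) 1 0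
        + hderiv (p4_poly m) 1 0 * hderiv (e_poly m) 1 (real t)"
      using val card 1 t zero[of q'] q by simp
    also have "\<dots> = 0" unfolding at_0 hderiv_p4_poly_grid[OF t(1)] by simp
    finally show ?thesis .
  next
    case 2
    then obtain t where t: "t \<in> {1..m}" "a q' = real t" using q zero by (blast elim: grid_coordE)
    have "?D = hderiv (p4_poly m) 1 0 * hderiv (e_poly m) 1 (real t)
        + hderiv (p4_poly m) 1 (real t) * hderiv (e_poly m) 1 0"
      using val card 2 t zero[of q] q by simp
    also have "\<dots> = 0" unfolding at_0 hderiv_p4_poly_grid[OF t(1)] by simp
    finally show ?thesis .
  next
    case 3
    have "?D = 2 * (hderiv (p4_poly m) 1 0 * hderiv (e_poly m) 1 0)
        + hderiv (e_poly m) 1 0 * hderiv (e_poly m) 1 0"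
      using val card 3 zero[of q] zero[of q'] q by simp
    also have "\<dots> = 0" unfolding at_0 by simp
    finally show ?thesis .
  qed
qed

lemma cofactor4_vanishes:
  assumes mono: "is_mono n \<beta>" and deg: "mdeg n \<beta> + card {i. i < n \<and> a i \<noteq> 0} < 4"
    and r1: "card {i. i < n \<and> a i \<noteq> 0} \<ge> 1"
  shows "cofactor_deriv n (f4_poly m) (p4_poly m) (e_poly m) (1 / 6) \<beta> a = 0"
proof -
  have "mdeg n \<beta> \<le> 2" using deg r1 by simp
  with mono show ?thesis
  proof (cases rule: mono_mdeg_le_2_cases)
    case zero
    have "card {i. i < n \<and> a i \<noteq> 0} \<in> {1, 2, 3}" using deg r1 by auto
    then show ?thesis unfolding zero using cofactor4_derivs(1) by auto
  next
    case (unit q s)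
    then show ?thesis using cofactor4_unit_mono deg r1 by (simp add: mdeg_unit_mono)
  next
    case (pair q q')
    then have "mdeg n \<beta> = 2" using mdeg_unit_mono_add[of q n q'] by simp
    then show ?thesis using pair cofactor4_unit_mono_add deg r1 by simp
  qed
qed

end

section \<open>Reducedness and the top-degree component\<close>

lemma not_divisible_by_k_powers:
  assumes le: "\<And>l. l < n \<Longrightarrow> \<beta> l \<le> N l" and lt: "(\<Sum>l<n. N l div (m + 1)) < k"
  shows "\<not> divisible_by_k_powers n m k \<beta>"
proof
  assume "divisible_by_k_powers n m k \<beta>"
  then obtain j where j: "\<forall>t<k. j t < n" "\<forall>i<n. (m + 1) * card {t. t < k \<and> j t = i} \<le> \<beta> i"
    unfolding divisible_by_k_powers_def by blast
  have "{..<k} = (\<Union>l\<in>{..<n}. {t. t < k \<and> j t = l})" using j(1) by auto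
  then have "k = card (\<Union>l\<in>{..<n}. {t. t < k \<and> j t = l})" by (metis card_lessThan)
  also have "\<dots> = (\<Sum>l<n. card {t. t < k \<and> j t = l})"
    by (rule card_UN_disjoint) auto
  also have "\<dots> \<le> (\<Sum>l<n. N l div (m + 1))"
  proof (rule sum_mono)
    fix l assume "l \<in> {..<n}"
    then have "(m + 1) * card {t. t < k \<and> j t = l} \<le> N l" using j(2) le[of l] by force
    then show "card {t. t < k \<and> j t = l} \<le> N l div (m + 1)"
      by (simp add: less_eq_div_iff_mult_less_eq mult.commute)
  qed
  finally show False using lt by simp
qed

lemma tensor_poly_support_bounds:
  assumes nz: "tensor_poly n F \<beta> \<noteq> 0" and deg: "\<And>l. l < n \<Longrightarrow> degree (F l) \<le> N l"
  shows "is_mono n \<beta>" "mdeg n \<beta> \<le> (\<Sum>l<n. N l)"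
    and "(\<Sum>l<n. N l div (m + 1)) < k \<Longrightarrow> \<not> divisible_by_k_powers n m k \<beta>"
proof -
  have \<beta>: "\<beta> \<in> mono_box n (\<lambda>l. degree (F l))" by (rule tensor_poly_support[OF nz])
  then have le: "\<And>l. l < n \<Longrightarrow> \<beta> l \<le> N l" using deg by (auto simp: mono_box_def intro: le_trans)
  show "is_mono n \<beta>" using \<beta> by (simp add: mono_box_def)
  show "mdeg n \<beta> \<le> (\<Sum>l<n. N l)" unfolding mdeg_def using le by (intro sum_mono) auto
  show "(\<Sum>l<n. N l div (m + 1)) < k \<Longrightarrow> \<not> divisible_by_k_powers n m k \<beta>"
    by (rule not_divisible_by_k_powers[OF le])
qed

lemma tensor_poly_zero_factor: "i < n \<Longrightarrow> F i = 0 \<Longrightarrow> tensor_poly n F \<beta> = 0"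
  unfolding tensor_poly_def by (auto intro!: prod_zero bexI[of _ i])

lemma single_term_support:
  assumes nz: "tensor_poly n (\<lambda>l. w * at_coord i f l) \<beta> \<noteq> 0" and i: "i < n" and w: "degree w \<le> m"
  shows "is_mono n \<beta>" "mdeg n \<beta> \<le> m * n + degree f"
    and "(m + degree f) div (m + 1) < k \<Longrightarrow> \<not> divisible_by_k_powers n m k \<beta>"
proof -
  let ?N = "\<lambda>l. m + (if l = i then degree f else 0)"
  have "degree (w * at_coord i f l) \<le> ?N l" for l
    using degree_mult_le[of w "at_coord i f l"] w by (auto simp: at_coord_def)
  note bounds = tensor_poly_support_bounds[OF nz this]
  have "(\<Sum>l<n. ?N l div (m + 1)) = (\<Sum>l<n. if l = i then (m + degree f) div (m + 1) else 0)"
    by (intro sum.cong) auto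
  then show "is_mono n \<beta>" "mdeg n \<beta> \<le> m * n + degree f"
    and "(m + degree f) div (m + 1) < k \<Longrightarrow> \<not> divisible_by_k_powers n m k \<beta>"
    using bounds i by (simp_all add: sum.distrib mult.commute)
qed

lemma pair_term_support:
  assumes nz: "tensor_poly n (\<lambda>l. w * (at_coord i p l * at_coord j g l)) \<beta> \<noteq> 0"
    and ij: "i < n" "j < n" "i \<noteq> j" and m: "m \<ge> 1" "degree w \<le> m" "degree g \<le> m"
  shows "is_mono n \<beta>" "mdeg n \<beta> \<le> m * n + degree p + m"
    and "(m + degree p) div (m + 1) + 1 < k \<Longrightarrow> \<not> divisible_by_k_powers n m k \<beta>"
proof -
  let ?N = "\<lambda>l. m + (if l = i then degree p else 0) + (if l = j then m else 0)"
  have "degree (w * (at_coord i p l * at_coord j g l)) \<le> ?N l" for l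
    using degree_mult_le[of w "at_coord i p l * at_coord j g l"]
      degree_mult_le[of "at_coord i p l" "at_coord j g l"] m ij
    by (auto simp: at_coord_def)
  note bounds = tensor_poly_support_bounds[OF nz this]
  have "(m + m) div (m + 1) = 1" using m(1) by (simp add: div_nat_eqI)
  then have "(\<Sum>l<n. ?N l div (m + 1))
      = (\<Sum>l<n. (if l = i then (m + degree p) div (m + 1) else 0) + (if l = j then 1 else 0))"
    using ij(3) by (intro sum.cong) auto
  then show "is_mono n \<beta>" "mdeg n \<beta> \<le> m * n + degree p + m"
    and "(m + degree p) div (m + 1) + 1 < k \<Longrightarrow> \<not> divisible_by_k_powers n m k \<beta>"
    using bounds ij by (simp_all add: sum.distrib mult.commute)
qed

lemma triple_term_support:
  assumes nz: "tensor_poly n (\<lambda>l. w * (at_coord i g l * at_coord j g l * at_coord h g l)) \<beta> \<noteq> 0"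
    and ijh: "i < n" "j < n" "h < n" "i \<noteq> j" "i \<noteq> h" "j \<noteq> h"
    and m: "m \<ge> 1" "degree w \<le> m" "degree g \<le> m"
  shows "is_mono n \<beta>" "mdeg n \<beta> \<le> m * n + 3 * m"
    and "3 < k \<Longrightarrow> \<not> divisible_by_k_powers n m k \<beta>"
proof -
  let ?N = "\<lambda>l. m + (if l = i then m else 0) + (if l = j then m else 0) + (if l = h then m else 0)"
  have "degree (w * (at_coord i g l * at_coord j g l * at_coord h g l)) \<le> ?N l" for l
  proof -
    have "degree (at_coord i g l * at_coord j g l * at_coord h g l)
        \<le> degree (at_coord i g l) + degree (at_coord j g l) + degree (at_coord h g l)"
      by (meson add_mono_thms_linordered_semiring(3) degree_mult_le order_trans)
    then show ?thesis
      using degree_mult_le[of w "at_coord i g l * at_coord j g l * at_coord h g l"] m ijh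
      by (auto simp: at_coord_def)
  qed
  note bounds = tensor_poly_support_bounds[OF nz this]
  have "(m + m) div (m + 1) = 1" using m(1) by (simp add: div_nat_eqI)
  then have "(\<Sum>l<n. ?N l div (m + 1))
      = (\<Sum>l<n. (if l = i then 1 else 0) + (if l = j then 1 else 0) + (if l = h then 1 else 0))"
    using ijh by (intro sum.cong) auto
  then show "is_mono n \<beta>" "mdeg n \<beta> \<le> m * n + 3 * m" and "3 < k \<Longrightarrow> \<not> divisible_by_k_powers n m k \<beta>"
    using bounds ijh by (simp_all add: sum.distrib mult.commute)
qed

lemma constant_term_support:
  assumes nz: "tensor_poly n (\<lambda>_. w) \<beta> \<noteq> 0" and w: "degree w \<le> m"
  shows "is_mono n \<beta>" "mdeg n \<beta> \<le> m * n" and "0 < k \<Longrightarrow> \<not> divisible_by_k_powers n m k \<beta>"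
  using tensor_poly_support_bounds[OF nz, of "\<lambda>_. m"] w by (simp_all add: mult.commute)

lemma witness_support:
  assumes "witness n w f p g c \<beta> \<noteq> 0"
  obtains (single) i where "i < n" "tensor_poly n (\<lambda>l. w * at_coord i f l) \<beta> \<noteq> 0"
  | (pair) i j where "i < n" "j < n" "i \<noteq> j" "p \<noteq> 0"
      "tensor_poly n (\<lambda>l. w * (at_coord i p l * at_coord j g l)) \<beta> \<noteq> 0"
  | (triple) i j h where "i < n" "j < n" "h < n" "i \<noteq> j" "i \<noteq> h" "j \<noteq> h" "c \<noteq> 0"
      "tensor_poly n (\<lambda>l. w * (at_coord i g l * at_coord j g l * at_coord h g l)) \<beta> \<noteq> 0"
  | (weight) "tensor_poly n (\<lambda>_. w) \<beta> \<noteq> 0"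
proof -
  consider "single_sum n w f \<beta> \<noteq> 0" | "pair_sum n w p g \<beta> \<noteq> 0" | "c \<noteq> 0" "triple_sum n w g \<beta> \<noteq> 0"
    | "tensor_poly n (\<lambda>_. w) \<beta> \<noteq> 0"
    using assms unfolding witness_def by fastforce
  then show thesis
  proof cases
    case 1
    then show thesis using that(1) unfolding single_sum_def
      by (auto elim!: sum.not_neutral_contains_not_neutral)
  next
    case 2
    moreover have "tensor_poly n (\<lambda>l. w * (at_coord i 0 l * at_coord j g l)) \<beta> = 0" if "i < n" for i j
      using that by (intro tensor_poly_zero_factor[of i]) (auto simp: at_coord_def)
    ultimately show thesis using that(2) unfolding pair_sum_def
      by (fastforce elim!: sum.not_neutral_contains_not_neutral split: if_splits)
  next
    case 3
    then show thesis using that(3) unfolding triple_sum_def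
      by (fastforce elim!: sum.not_neutral_contains_not_neutral split: if_splits)
  next
    case 4
    then show thesis by (rule that(4))
  qed
qed

lemma finite_support_witness: "finite_support (witness n w f p g c)"
  by (simp add: witness_def single_sum_def pair_sum_def triple_sum_def)

lemma top_degree_div:
  fixes m k d :: nat
  assumes m: "m \<ge> 1" and k: "k \<ge> 2" and d: "d = (m + 1) * (k - 1) - 1"
  shows "(m + d) div (m + 1) = k - 1"
proof -
  obtain j where j: "k = j + 2" using k by (metis add.commute le_Suc_ex)
  obtain i where i: "m = i + 1" using m by (metis add.commute le_Suc_ex)
  have "m + d = (m - 1) + (k - 1) * (m + 1)" using d unfolding i j by (simp add: algebra_simps)
  also have "\<dots> div (m + 1) = (k - 1) + (m - 1) div (m + 1)" by (rule div_mult_self1) simp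
  finally show ?thesis by simp
qed

lemma top_degree_ge:
  fixes m k :: nat
  assumes "k \<ge> 2"
  shows "m \<le> (m + 1) * (k - 1) - 1"
proof -
  have "(m + 1) * 1 \<le> (m + 1) * (k - 1)" using assms by (intro mult_le_mono2) simp
  then show ?thesis by simp
qed

lemma witness_reduced:
  assumes m: "m \<ge> 1" and k: "k \<ge> 2" and w: "degree w = m"
    and f: "degree f = (m + 1) * (k - 1) - 1" and g: "degree g \<le> m"
    and p: "p \<noteq> 0 \<Longrightarrow> degree p + m < degree f \<and> (m + degree p) div (m + 1) + 1 < k"
    and c: "c \<noteq> 0 \<Longrightarrow> 3 * m < degree f \<and> 3 < k"
  shows "reduced n m k (witness n w f p g c)"
proof -
  have top: "(m + degree f) div (m + 1) = k - 1" by (rule top_degree_div[OF m k f])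
  have bound: "m * n + (m + 1) * (k - 1) - 1 = m * n + degree f" using f k by simp
  have "is_mono n \<beta> \<and> mdeg n \<beta> \<le> m * n + degree f \<and> \<not> divisible_by_k_powers n m k \<beta>"
    if "witness n w f p g c \<beta> \<noteq> 0" for \<beta>
    using that
  proof (cases rule: witness_support)
    case (single i)
    then show ?thesis using single_term_support[OF single(2,1), where m = m] w top k by simp
  next
    case (pair i j)
    then show ?thesis using pair_term_support[OF pair(5,1-3) m _ g] p w by force
  next
    case (triple i j h)
    then show ?thesis using triple_term_support[OF triple(8,1-6) m _ g] c w by force
  next
    case weight
    then show ?thesis using constant_term_support[OF weight, of m] w k by simp
  qed
  then show ?thesis
    using finite_support_witness[of n w f p g c]
    unfolding reduced_def is_poly_def finite_support_def bound by auto
qed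

definition top_mono :: "nat \<Rightarrow> nat \<Rightarrow> nat \<Rightarrow> nat \<Rightarrow> mono" where
  "top_mono n m d i = (\<lambda>j. if j < n then m + (if j = i then d else 0) else 0)"

lemma wpoly_eq_sum_top_mono: "wpoly n m d (\<lambda>_. 0) \<beta> = (\<Sum>i<n. if \<beta> = top_mono n m d i then 1 else 0)"
  unfolding wpoly_def top_mono_def by (simp only: mult_0_right add_0_right)

lemma mdeg_top_mono: "i < n \<Longrightarrow> mdeg n (top_mono n m d i) = m * n + d"
  unfolding mdeg_def top_mono_def by (simp add: sum.distrib)

lemma tensor_poly_top_degree:
  assumes "mdeg n \<beta> = (\<Sum>l<n. degree (f l))"
  shows "tensor_poly n f \<beta> =
    (if \<beta> = (\<lambda>l. if l < n then degree (f l) else 0) then \<Prod>l<n. lead_coeff (f l) else 0)"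
proof (cases "\<beta> = (\<lambda>l. if l < n then degree (f l) else 0)")
  case True
  then show ?thesis by (simp add: tensor_poly_def is_mono_def)
next
  case False
  have "tensor_poly n f \<beta> = 0"
  proof (rule ccontr)
    assume "tensor_poly n f \<beta> \<noteq> 0"
    then have le: "\<And>l. l < n \<Longrightarrow> \<beta> l \<le> degree (f l)" and mono: "is_mono n \<beta>"
      by (auto dest!: tensor_poly_support simp: mono_box_def)
    from False obtain l where l: "\<beta> l \<noteq> (if l < n then degree (f l) else 0)" by auto
    with mono have "l < n" "\<beta> l \<noteq> degree (f l)" by (auto simp: is_mono_def split: if_splits)
    then have "(\<Sum>l<n. \<beta> l) < (\<Sum>l<n. degree (f l))"
      using le by (intro sum_strict_mono_ex1) (auto intro!: bexI[of _ l] simp: le_neq_implies_less)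
    then show False using assms by (simp add: mdeg_def)
  qed
  then show ?thesis using False by simp
qed

lemma single_sum_top_degree:
  assumes w: "w \<noteq> 0" "degree w = m" and f: "f \<noteq> 0" and \<beta>: "mdeg n \<beta> = m * n + degree f"
  shows "single_sum n w f \<beta> = lead_coeff w ^ n * lead_coeff f * wpoly n m (degree f) (\<lambda>_. 0) \<beta>"
proof -
  have summand: "tensor_poly n (\<lambda>l. w * at_coord i f l) \<beta> =
      (if \<beta> = top_mono n m (degree f) i then lead_coeff w ^ n * lead_coeff f else 0)" if i: "i < n" for i
  proof -
    have deg: "degree (w * at_coord i f l) = m + (if l = i then degree f else 0)" for l
      using w f by (auto simp: at_coord_def degree_mult_eq)
    have top: "(\<lambda>l. if l < n then degree (w * at_coord i f l) else 0) = top_mono n m (degree f) i"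
      by (simp add: deg top_mono_def cong: if_cong)
    have sum_deg: "(\<Sum>l<n. degree (w * at_coord i f l)) = m * n + degree f"
      using i by (simp add: deg sum.distrib mult.commute)
    have "(\<Prod>l<n. lead_coeff (w * at_coord i f l)) = (\<Prod>l<n. lead_coeff w * (if l = i then lead_coeff f else 1))"
      by (intro prod.cong) (auto simp: at_coord_def lead_coeff_mult)
    also have "\<dots> = lead_coeff w ^ n * lead_coeff f"
      using i by (simp add: prod.distrib)
    finally show ?thesis
      using tensor_poly_top_degree[of n \<beta> "\<lambda>l. w * at_coord i f l"] \<beta> unfolding top sum_deg by simp
  qed
  show ?thesis
    unfolding single_sum_def wpoly_eq_sum_top_mono sum_distrib_left
    by (intro sum.cong refl) (simp add: summand)
qed

lemma witness_top_degree:
  assumes m: "m \<ge> 1" "degree w = m" and f: "degree f > 0" and g: "degree g \<le> m"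
    and p: "p \<noteq> 0 \<Longrightarrow> degree p + m < degree f" and c: "c \<noteq> 0 \<Longrightarrow> 3 * m < degree f"
    and \<beta>: "mdeg n \<beta> = m * n + degree f"
  shows "witness n w f p g c \<beta> = single_sum n w f \<beta>"
proof -
  have "pair_sum n w p g \<beta> = 0"
    unfolding pair_sum_def
  proof (intro sum.neutral ballI)
    fix i j assume ij: "i \<in> {..<n}" "j \<in> {..<n}"
    have "tensor_poly n (\<lambda>l. w * (at_coord i p l * at_coord j g l)) \<beta> = 0" if "i \<noteq> j"
    proof (cases "p = 0")
      case True
      then show ?thesis using ij by (intro tensor_poly_zero_factor[of i]) (auto simp: at_coord_def)
    next
      case False
      show ?thesis
        using pair_term_support(2)[of n w i p j g \<beta> m] ij that m g p[OF False] \<beta> by force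
    qed
    then show "(if i \<noteq> j then tensor_poly n (\<lambda>l. w * (at_coord i p l * at_coord j g l)) \<beta> else 0) = 0"
      by simp
  qed
  moreover have "c * triple_sum n w g \<beta> = 0"
  proof (cases "c = 0")
    case False
    have "triple_sum n w g \<beta> = 0"
      unfolding triple_sum_def
      using triple_term_support(2)[of n w _ g _ _ \<beta> m] m g c[OF False] \<beta>
      by (intro sum.neutral ballI) force
    then show ?thesis by simp
  qed simp
  moreover have "tensor_poly n (\<lambda>_. w) \<beta> = 0"
    using constant_term_support(2)[of n w \<beta> m] m f \<beta> by force
  ultimately show ?thesis by (simp add: witness_def)
qed

lemma phi_witness:
  assumes m: "m \<ge> 1" "degree w = m" and k: "k \<ge> 2" and f: "degree f = (m + 1) * (k - 1) - 1"
    and g: "degree g \<le> m"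
    and p: "p \<noteq> 0 \<Longrightarrow> degree p + m < degree f" and c: "c \<noteq> 0 \<Longrightarrow> 3 * m < degree f"
  shows "phi n m k (witness n w f p g c) =
    (\<lambda>\<beta>. lead_coeff w ^ n * lead_coeff f * wpoly n m (degree f) (\<lambda>_. 0) \<beta>)"
proof
  fix \<beta>
  have f_pos: "degree f > 0" using top_degree_ge[where m = m, OF k] m f by simp
  have w: "w \<noteq> 0" using m by auto
  have bound: "m * n + (m + 1) * (k - 1) - 1 = m * n + degree f" using f f_pos by simp
  show "phi n m k (witness n w f p g c) \<beta> = lead_coeff w ^ n * lead_coeff f * wpoly n m (degree f) (\<lambda>_. 0) \<beta>"
  proof (cases "mdeg n \<beta> = m * n + degree f")
    case True
    have "witness n w f p g c \<beta> = single_sum n w f \<beta>"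
      by (rule witness_top_degree) (use m f_pos g p c True in auto)
    moreover have "f \<noteq> 0" using f_pos by auto
    ultimately show ?thesis
      unfolding phi_def bound using single_sum_top_degree[OF w m(2) _ True] True by simp
  next
    case False
    then have "wpoly n m (degree f) (\<lambda>_. 0) \<beta> = 0"
      unfolding wpoly_eq_sum_top_mono by (intro sum.neutral ballI) (auto simp: mdeg_top_mono)
    then show ?thesis unfolding phi_def bound using False by simp
  qed
qed

lemma finite_W_index: "finite (W_index n m k)"
proof (rule finite_subset)
  let ?D = "(m + 1) * (k - 1) - 1"
  show "W_index n m k \<subseteq> {..?D} \<times> mono_box n (\<lambda>_. ?D)"
  proof
    fix x assume "x \<in> W_index n m k"
    then obtain d l where x: "x = (d, l)" "is_mono n l" "d + (m + 1) * (\<Sum>i<n. l i) = ?D"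
      unfolding W_index_def by auto
    have "l i \<le> ?D" if "i < n" for i
      using x(3) member_le_sum[of i "{..<n}" l] that by (simp add: algebra_simps)
    then show "x \<in> {..?D} \<times> mono_box n (\<lambda>_. ?D)" using x by (auto simp: mono_box_def)
  qed
qed (simp add: finite_mono_box)

lemma sum_W_index_single:
  assumes "(d0, l0) \<in> W_index n m k"
  shows "(\<Sum>(d, l)\<in>W_index n m k. (if (d, l) = (d0, l0) then L else 0) * wpoly n m d l \<beta>) =
    L * wpoly n m d0 l0 \<beta>"
proof -
  have "(\<Sum>(d, l)\<in>W_index n m k. (if (d, l) = (d0, l0) then L else 0) * wpoly n m d l \<beta>) =
      (\<Sum>x\<in>W_index n m k. if x = (d0, l0) then L * wpoly n m d0 l0 \<beta> else 0)"
  proof (intro sum.cong refl)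
    fix x :: "nat \<times> mono"
    obtain d l where x: "x = (d, l)" by fastforce
    show "(case x of (d, l) \<Rightarrow> (if (d, l) = (d0, l0) then L else 0) * wpoly n m d l \<beta>) =
        (if x = (d0, l0) then L * wpoly n m d0 l0 \<beta> else 0)"
      unfolding x by (cases "(d, l) = (d0, l0)") auto
  qed
  also have "\<dots> = L * wpoly n m d0 l0 \<beta>" using finite_W_index assms by simp
  finally show ?thesis .
qed

context
  fixes m k n :: nat and f p g :: "real poly" and c :: real
  assumes m: "m \<ge> 1" and k: "k \<ge> 2"
    and f: "degree f = (m + 1) * (k - 1) - 1" and g: "degree g \<le> m"
    and p: "p \<noteq> 0 \<Longrightarrow> degree p + m < degree f \<and> (m + degree p) div (m + 1) + 1 < k"
    and c: "c \<noteq> 0 \<Longrightarrow> 3 * m < degree f \<and> 3 < k"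
    and cofactor: "\<And>a \<beta>. grid_point m n a \<Longrightarrow> is_mono n \<beta> \<Longrightarrow>
      mdeg n \<beta> + card {i. i < n \<and> a i \<noteq> 0} < k \<Longrightarrow> card {i. i < n \<and> a i \<noteq> 0} \<ge> 1 \<Longrightarrow>
      cofactor_deriv n f p g c \<beta> a = 0"
begin

lemma witness_in_U: "witness n (u_poly m) f p g c \<in> U n m k"
  unfolding U_def
proof (intro CollectI conjI allI impI)
  show "reduced n m k (witness n (u_poly m) f p g c)"
    using witness_reduced[OF m k degree_u_poly f g p c] .
  fix a :: "nat \<Rightarrow> nat" assume a: "(\<forall>i<n. a i \<le> m) \<and> (\<exists>i<n. a i \<noteq> 0)"
  then have "grid_point m n (\<lambda>i. real (a i))" by (auto simp: grid_point_def)
  moreover have "card {i. i < n \<and> real (a i) \<noteq> 0} \<ge> 1"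
    using a by (auto simp: Suc_le_eq card_gt_0_iff)
  moreover have "poly (u_poly m) (real (a i)) = 0" if "i < n" "real (a i) \<noteq> 0" for i
    using a that by (intro poly_u_poly_grid) auto
  ultimately show "zero_mult_ge n (witness n (u_poly m) f p g c) k (\<lambda>i. real (a i))"
    using cofactor by (intro witness_zero_mult_ge) auto
qed

lemma witness_top_coefficient:
  "\<exists>P \<in> U n m k. \<exists>coef :: nat \<times> mono \<Rightarrow> real.
    phi n m k P = (\<lambda>\<beta>. \<Sum>(d, l)\<in>W_index n m k. coef (d, l) * wpoly n m d l \<beta>)
    \<and> coef ((m + 1) * (k - 1) - 1, \<lambda>_. 0) \<noteq> 0"
proof -
  let ?L = "lead_coeff (u_poly m) ^ n * lead_coeff f"
  have phi: "phi n m k (witness n (u_poly m) f p g c) = (\<lambda>\<beta>. ?L * wpoly n m (degree f) (\<lambda>_. 0) \<beta>)"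
    using phi_witness[OF m degree_u_poly k f g] p c by auto
  have "degree f \<ge> m" unfolding f by (rule top_degree_ge[OF k])
  then have "?L \<noteq> 0" using m lead_coeff_u_poly_nonzero[of m] by auto
  moreover have "(degree f, \<lambda>_. 0) \<in> W_index n m k"
    using f by (simp add: W_index_def is_mono_def)
  ultimately show ?thesis
    using witness_in_U phi sum_W_index_single[of "degree f" "\<lambda>_. 0" n m k ?L] f
    by (intro bexI[of _ "witness n (u_poly m) f p g c"]
        exI[of _ "\<lambda>x. if x = (degree f, \<lambda>_. 0) then ?L else 0"]) auto
qed

end

theorem lemma4p5:
  fixes m k n :: nat
  assumes "m \<ge> 1" and "k \<in> {2, 3, 4}" and "n \<ge> k - 1"
  shows "\<exists>P \<in> U n m k. \<exists>c :: nat \<times> mono \<Rightarrow> real.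
           phi n m k P = (\<lambda>\<beta>. \<Sum>(d, l)\<in>W_index n m k. c (d, l) * wpoly n m d l \<beta>)
         \<and> c ((m + 1) * (k - 1) - 1, \<lambda>_. 0) \<noteq> 0"
proof -
  note m = \<open>m \<ge> 1\<close>
  consider "k = 2" | "k = 3" | "k = 4" using assms(2) by blast
  then show ?thesis
  proof cases
    case 1
    show ?thesis unfolding 1
      using degree_e_poly[OF m] cofactor2_vanishes
      by (intro witness_top_coefficient[OF m, where f = "e_poly m" and p = 0 and g = "e_poly m" and c = 0])
         auto
  next
    case 2
    have p3: "degree (p3_poly m) \<le> m" by (rule degree_p3_poly[OF m])
    then have "(m + degree (p3_poly m)) div (m + 1) < 2" by (intro less_mult_imp_div_less) simp
    then show ?thesis unfolding 2
      using p3 degree_f3_poly[OF m] degree_e_poly[OF m] cofactor3_vanishes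
      by (intro witness_top_coefficient[OF m, where f = "f3_poly m" and p = "p3_poly m" and g = "e_poly m"
            and c = 0]) auto
  next
    case 3
    have p4: "degree (p4_poly m) \<le> 2 * m + 1" by (rule degree_p4_poly)
    then have "(m + degree (p4_poly m)) div (m + 1) < 3" by (intro less_mult_imp_div_less) simp
    then show ?thesis unfolding 3
      using p4 degree_f4_poly[OF m] degree_e_poly[OF m] cofactor4_vanishes
      by (intro witness_top_coefficient[OF m, where f = "f4_poly m" and p = "p4_poly m" and g = "e_poly m"
            and c = "1 / 6"]) auto
  qed
qed

end
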